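(* Let $n>(p+s)^4$ be an integer. For any $i \in \{2,3,\ldots,p-1+s\}$, the number $\rho_i:=\sum_{k=1}^n r_{i,k}$ satisfies $\Phi_{n}^{-1} d_n^{p-1+s-i} \rho_{i} \in \mathbb{Z}$.
   Context: Let $p\geqslant 5$ be a prime and $s$ a positive integer. Write $v_p$ for the $p$-adic valuation, $(\alpha)_k=\alpha(\alpha+1)\cdots(\alpha+k-1)$, and $d_n=\operatorname{LCM}\{1,2,\ldots,n\}$. Put $N_0=v_p(p-1+s)$ and $M_0=p^{2+N_0}s-1$. For an integer $n>(p+s)^4$ let \[R_n(t)=p^{pn}\, n!^s\, t^{M_0}\,\frac{\prod_{j=1}^{p-1}(t+\frac{j}{p})_n}{(t)_{n+1}^{p-1+s}}\in\mathbb{Q}(t),\] with partial fraction decomposition $R_n(t)=\sum_{i=1}^{p-1+s}\sum_{k=1}^{n} r_{i,k}(t+k)^{-i}$, $r_{i,k}\in\mathbb{Q}$. Let $\Phi_{n} = \prod_{\sqrt{pn} < q \leqslant n,\ q\text{ prime}} q^{\phi(n/q)}$, where $\phi(x)=0$ if $\{x\}\in[0,2/p)$ and $\phi(x)=j-1$ if $\{x\}\in[j/p,(j+1)/p)$ for $j=2,\ldots,p-1$, with $\{x\}=x-\lfloor x\rfloor$. *)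

theory Defs
  imports "HOL-Computational_Algebra.Computational_Algebra"
begin

definition N0 :: "nat \<Rightarrow> nat \<Rightarrow> nat" where
  "N0 p s = multiplicity p (p - 1 + s)"

definition M0 :: "nat \<Rightarrow> nat \<Rightarrow> nat" where
  "M0 p s = p ^ (2 + N0 p s) * s - 1"

definition dlcm :: "nat \<Rightarrow> nat" where
  "dlcm n = Lcm {1..n}"

definition Rfun :: "nat \<Rightarrow> nat \<Rightarrow> nat \<Rightarrow> rat \<Rightarrow> rat" where
  "Rfun p s n t =
     of_nat p ^ (p * n) * (fact n) ^ s * t ^ (M0 p s) *
     (\<Prod>j=1..p-1. pochhammer (t + of_nat j / of_nat p) n)
     / (pochhammer t (n + 1)) ^ (p - 1 + s)"

definition pf_coeff :: "nat \<Rightarrow> nat \<Rightarrow> nat \<Rightarrow> nat \<Rightarrow> nat \<Rightarrow> rat" where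
  "pf_coeff p s n = (THE r. (\<forall>i k. (i \<notin> {1..p-1+s} \<or> k \<notin> {1..n}) \<longrightarrow> r i k = 0) \<and>
      (\<forall>t::rat. (\<forall>k\<in>{0..n}. t \<noteq> - of_nat k) \<longrightarrow>
         Rfun p s n t = (\<Sum>i=1..p-1+s. \<Sum>k=1..n. r i k / (t + of_nat k) ^ i)))"

definition rho :: "nat \<Rightarrow> nat \<Rightarrow> nat \<Rightarrow> nat \<Rightarrow> rat" where
  "rho p s n i = (\<Sum>k=1..n. pf_coeff p s n i k)"

definition phi_p :: "nat \<Rightarrow> real \<Rightarrow> nat" where
  "phi_p p x = (if frac x < 2 / real p then 0 else nat \<lfloor>real p * frac x\<rfloor> - 1)"

definition Phi :: "nat \<Rightarrow> nat \<Rightarrow> nat" where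
  "Phi p n = (\<Prod>q\<in>{q. prime q \<and> sqrt (real (p * n)) < real q \<and> q \<le> n}.
                 q ^ phi_p p (real n / real q))"

end

(*
  By partial fractions, r_{i,k} is the coefficient of (t + k)^(p-1+s-i) in the expansion at t = -k of
  R_n(t) (t + k)^(p-1+s). This expansion is a product of p^n, a power of t, p - 1 progression factors
  prod_{u<n} (j + p u + p t), and p - 1 + s copies of the cofactor 1 / prod_{l<>k} (t + l), s of them
  multiplied by n!. It therefore suffices to bound, prime by prime, the q-adic valuation of its m-th
  coefficient from below by v_q(Phi_n) - m v_q(d_n). The m-th coefficient of 1 / (c + X) has valuation
  -(m+1) v_q(c), and v_q(l - k) <= v_q(d_n), so such bounds multiply along the product.
  For q = p the factor p^n pays for the cofactors (Legendre). For q <> p each progression factor times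
  a cofactor is q-integral, because n consecutive terms of a progression with difference prime to q
  have a product divisible by the q-part of n!. For sqrt(p n) < q <= n every node difference and
  progression term has valuation at most 1, and counting the progression terms divisible by q gives
  the extra valuation phi(n/q) of Phi_n.
*)

theory Submission
  imports Defs "HOL-Computational_Algebra.Field_as_Ring"
begin

section \<open>\<open>q\<close>-adic valuations of rationals\<close>

text \<open>\<open>padic_val q 0 = 0\<close> is a junk value; lower bounds are therefore stated with \<open>padic_val_ge\<close>,
  which gives \<open>0\<close> infinite valuation.\<close>

definition padic_val :: "nat \<Rightarrow> rat \<Rightarrow> int" where
  "padic_val q x = (case quotient_of x of (a, b) \<Rightarrow>
     int (multiplicity (int q) a) - int (multiplicity (int q) b))"

lemma rat_nonzero_as_int_div:
  assumes "x \<noteq> (0::rat)"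
  obtains a b where "a \<noteq> 0" "b \<noteq> 0" "x = of_int a / of_int b"
proof -
  obtain a b where "quotient_of x = (a, b)" by fastforce
  with assms that show ?thesis
    using quotient_of_div quotient_of_denom_pos by (metis div_0 of_int_0 order_less_irrefl)
qed

lemma padic_val_of_int_div:
  assumes q: "prime q" and a: "a \<noteq> 0" and b: "b \<noteq> 0"
  shows "padic_val q (of_int a / of_int b) = int (multiplicity (int q) a) - int (multiplicity (int q) b)"
proof -
  obtain a' b' where qo: "quotient_of (of_int a / of_int b) = (a', b')" by fastforce
  have eq: "of_int a / of_int b = (of_int a' / of_int b' :: rat)" using quotient_of_div[OF qo] .
  have b': "b' > 0" using quotient_of_denom_pos[OF qo] .
  with eq a b have a': "a' \<noteq> 0" by auto
  from eq b b' have "a * b' = a' * b" by (simp add: frac_eq_eq) (metis of_int_eq_iff of_int_mult)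
  then have "multiplicity (int q) a + multiplicity (int q) b' = multiplicity (int q) a' + multiplicity (int q) b"
    using q a b b' a' by (metis prime_elem_multiplicity_mult_distrib prime_nat_int_transfer
        prime_imp_prime_elem less_irrefl)
  then show ?thesis unfolding padic_val_def qo by simp
qed

lemma padic_val_of_int: "prime q \<Longrightarrow> z \<noteq> 0 \<Longrightarrow> padic_val q (of_int z) = int (multiplicity (int q) z)"
  using padic_val_of_int_div[of q z 1] by simp

lemma multiplicity_of_nat_of_nat: "multiplicity (int p) (int x) = multiplicity p x"
proof (cases "x = 0 \<or> is_unit p")
  case True
  then show ?thesis by (auto simp: multiplicity_unit_left)
next
  case False
  then have x: "x \<noteq> 0" "int x \<noteq> 0" and p: "\<not> is_unit p" "\<not> is_unit (int p)" by auto
  have "multiplicity p x \<le> multiplicity (int p) (int x)"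
    by (rule multiplicity_geI[OF x(2) p(2)]) (metis multiplicity_dvd of_nat_dvd_iff of_nat_power)
  moreover have "multiplicity (int p) (int x) \<le> multiplicity p x"
    by (rule multiplicity_geI[OF x(1) p(1)]) (metis multiplicity_dvd of_nat_dvd_iff of_nat_power)
  ultimately show ?thesis by simp
qed

lemma padic_val_of_nat: "prime q \<Longrightarrow> z \<noteq> 0 \<Longrightarrow> padic_val q (of_nat z) = int (multiplicity q z)"
  using padic_val_of_int[of q "int z"] by (simp add: multiplicity_of_nat_of_nat)

lemma padic_val_mult:
  assumes q: "prime q" and "x \<noteq> 0" "y \<noteq> 0"
  shows "padic_val q (x * y) = padic_val q x + padic_val q y"
proof -
  obtain a b where ab: "a \<noteq> 0" "b \<noteq> 0" "x = of_int a / of_int b"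
    using assms rat_nonzero_as_int_div by blast
  obtain c d where cd: "c \<noteq> 0" "d \<noteq> 0" "y = of_int c / of_int d"
    using assms rat_nonzero_as_int_div by blast
  have "x * y = of_int (a * c) / of_int (b * d)" using ab cd by simp
  then have "padic_val q (x * y) = int (multiplicity (int q) (a * c)) - int (multiplicity (int q) (b * d))"
    using ab cd q by (simp only:) (intro padic_val_of_int_div, auto)
  with ab cd q show ?thesis
    by (simp add: padic_val_of_int_div prime_elem_multiplicity_mult_distrib)
qed

lemma padic_val_1 [simp]: "padic_val q 1 = 0"
  by (simp add: padic_val_def)

lemma padic_val_inverse: "prime q \<Longrightarrow> padic_val q (inverse x) = - padic_val q x"
proof (cases "x = 0")
  case False
  then obtain a b where ab: "a \<noteq> 0" "b \<noteq> 0" "x = of_int a / of_int b"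
    using rat_nonzero_as_int_div by blast
  then have "inverse x = of_int b / of_int a" by simp
  with ab show "prime q \<Longrightarrow> ?thesis" by (simp add: padic_val_of_int_div)
qed (simp add: padic_val_def)

lemma padic_val_divide:
  "prime q \<Longrightarrow> x \<noteq> 0 \<Longrightarrow> y \<noteq> 0 \<Longrightarrow> padic_val q (x / y) = padic_val q x - padic_val q y"
  by (simp add: divide_inverse padic_val_mult padic_val_inverse)

lemma padic_val_power: "prime q \<Longrightarrow> x \<noteq> 0 \<Longrightarrow> padic_val q (x ^ m) = int m * padic_val q x"
  by (induction m) (auto simp: padic_val_mult algebra_simps)

lemma padic_val_prod:
  assumes "prime q" "\<And>a. a \<in> A \<Longrightarrow> f a \<noteq> 0"
  shows "padic_val q (\<Prod>a\<in>A. f a) = (\<Sum>a\<in>A. padic_val q (f a))"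
  using assms(2)
  by (induction A rule: infinite_finite_induct) (auto simp: padic_val_mult assms(1))

lemma padic_val_uminus: "prime q \<Longrightarrow> padic_val q (- x) = padic_val q x"
  using padic_val_mult[of q "-1" x] padic_val_of_int[of q "-1"] by (cases "x = 0") auto

lemma padic_val_of_int_le_1:
  assumes q: "prime q" and z: "z \<noteq> 0" and small: "\<bar>z\<bar> < int q ^ 2"
  shows "padic_val q (of_int z) \<le> 1"
proof (rule ccontr)
  assume "\<not> padic_val q (of_int z) \<le> 1"
  then have "2 \<le> multiplicity (int q) z" using padic_val_of_int[OF q z] by simp
  then have "int q ^ 2 dvd z" by (rule multiplicity_dvd')
  then have "\<bar>int q ^ 2\<bar> \<le> \<bar>z\<bar>" using z by (rule dvd_imp_le_int[rotated])
  then show False using small by simp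
qed

definition padic_val_ge :: "nat \<Rightarrow> rat \<Rightarrow> int \<Rightarrow> bool" where
  "padic_val_ge q x B \<longleftrightarrow> x = 0 \<or> B \<le> padic_val q x"

lemma padic_val_ge_0 [simp]: "padic_val_ge q 0 B"
  by (simp add: padic_val_ge_def)

lemma padic_val_ge_mono: "padic_val_ge q x B \<Longrightarrow> B' \<le> B \<Longrightarrow> padic_val_ge q x B'"
  by (auto simp: padic_val_ge_def)

lemma padic_val_ge_mult:
  "prime q \<Longrightarrow> padic_val_ge q x A \<Longrightarrow> padic_val_ge q y B \<Longrightarrow> padic_val_ge q (x * y) (A + B)"
  by (cases "x = 0 \<or> y = 0") (auto simp: padic_val_ge_def padic_val_mult)

lemma padic_val_ge_add:
  assumes q: "prime q" and x: "padic_val_ge q x B" and y: "padic_val_ge q y B"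
  shows "padic_val_ge q (x + y) B"
proof (cases "x = 0 \<or> y = 0 \<or> x + y = 0")
  case False
  obtain a b where ab: "a \<noteq> 0" "b \<noteq> 0" "x = of_int a / of_int b"
    using False rat_nonzero_as_int_div by blast
  obtain c d where cd: "c \<noteq> 0" "d \<noteq> 0" "y = of_int c / of_int d"
    using False rat_nonzero_as_int_div by blast
  have xy: "x + y = of_int (a * d + c * b) / of_int (b * d)"
    using ab cd by (simp add: field_simps)
  with False have nz: "a * d + c * b \<noteq> 0" by (metis div_0 of_int_0)
  let ?m = "\<lambda>z. int (multiplicity (int q) z)"
  have qq: "prime_elem (int q)" using q by simp
  have vx: "B + ?m b + ?m d \<le> ?m (a * d)" and vy: "B + ?m b + ?m d \<le> ?m (c * b)"
    using x y False ab cd q qq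
    by (auto simp: padic_val_ge_def padic_val_of_int_div prime_elem_multiplicity_mult_distrib)
  have "B + ?m b + ?m d \<le> ?m (a * d + c * b)"
  proof (cases "B + ?m b + ?m d \<le> 0")
    case False
    define N where "N = nat (B + ?m b + ?m d)"
    have "int q ^ N dvd a * d" "int q ^ N dvd c * b"
      using vx vy False by (auto simp: N_def intro!: multiplicity_dvd')
    then have "int q ^ N dvd a * d + c * b" by simp
    then have "N \<le> multiplicity (int q) (a * d + c * b)"
      using nz qq by (intro multiplicity_geI) (auto simp: prime_elem_def)
    with False show ?thesis by (simp add: N_def)
  qed simp
  moreover have "padic_val q (x + y) = ?m (a * d + c * b) - ?m (b * d)"
    unfolding xy using nz ab cd q by (intro padic_val_of_int_div) auto
  ultimately show ?thesis
    using ab cd qq by (simp add: padic_val_ge_def prime_elem_multiplicity_mult_distrib)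
qed (use x y in \<open>auto simp: padic_val_ge_def\<close>)

lemma padic_val_ge_sum:
  "prime q \<Longrightarrow> (\<And>a. a \<in> A \<Longrightarrow> padic_val_ge q (f a) B) \<Longrightarrow> padic_val_ge q (\<Sum>a\<in>A. f a) B"
  by (induction A rule: infinite_finite_induct) (auto intro: padic_val_ge_add)

lemma padic_val_ge_of_int: "prime q \<Longrightarrow> padic_val_ge q (of_int z) 0"
  by (cases "z = 0") (auto simp: padic_val_ge_def padic_val_of_int)

lemma padic_val_ge_of_nat: "prime q \<Longrightarrow> padic_val_ge q (of_nat z) 0"
  using padic_val_ge_of_int[of q "int z"] by simp

lemma dvd_indicator_le_padic_val:
  assumes q: "prime q" and z: "z \<noteq> 0"
  shows "(if int q dvd z then 1 else 0) \<le> padic_val q (of_int z)"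
proof -
  have "int q dvd z \<Longrightarrow> 1 \<le> multiplicity (int q) z"
    using z q by (intro multiplicity_geI) (auto simp: prime_elem_def)
  then show ?thesis using padic_val_of_int[OF q z] by auto
qed

lemma Ints_if_padic_val_ge_0:
  assumes "\<And>q. prime q \<Longrightarrow> padic_val_ge q x 0"
  shows "x \<in> (\<int> :: rat set)"
proof -
  obtain a b where qo: "quotient_of x = (a, b)" by fastforce
  have x: "x = of_int a / of_int b" and b: "b > 0"
    using quotient_of_div[OF qo] quotient_of_denom_pos[OF qo] by auto
  have "b dvd a"
  proof (cases "a = 0")
    case False
    show ?thesis
    proof (rule multiplicity_le_imp_dvd)
      fix r :: int
      assume r: "prime r"
      then have "prime (nat r)" "r \<ge> 0" by (simp_all add: prime_ge_0_int)
      then show "multiplicity r b \<le> multiplicity r a"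
        using assms[of "nat r"] padic_val_of_int_div[of "nat r" a b] False b x
        by (simp add: padic_val_ge_def)
    qed (use b in simp)
  qed simp
  then obtain c where "a = b * c" ..
  with x b show ?thesis by simp
qed

section \<open>Power series with bounded coefficient valuations\<close>

definition fps_padic_bound :: "nat \<Rightarrow> int \<Rightarrow> int \<Rightarrow> rat fps \<Rightarrow> bool" where
  "fps_padic_bound q B e f \<longleftrightarrow> (\<forall>m. padic_val_ge q (f $ m) (B - int m * e))"

definition fps_lin :: "rat \<Rightarrow> rat \<Rightarrow> rat fps" where
  "fps_lin a b = fps_const a + fps_const b * fps_X"

lemma fps_of_poly_linear: "fps_of_poly [:a, b:] = fps_lin a b"
  by (simp add: fps_lin_def fps_of_poly_pCons fps_of_poly_const mult.commute)

lemma inverse_fps_prod: "inverse (\<Prod>x\<in>A. f x) = (\<Prod>x\<in>A. inverse (f x :: rat fps))"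
  by (induction A rule: infinite_finite_induct) (simp_all add: fps_inverse_mult)

lemma fps_padic_boundD: "fps_padic_bound q B e f \<Longrightarrow> padic_val_ge q (f $ m) (B - int m * e)"
  by (simp add: fps_padic_bound_def)

lemma fps_padic_bound_mono:
  assumes "fps_padic_bound q B e f" "B' \<le> B" "e \<le> e'"
  shows "fps_padic_bound q B' e' f"
  unfolding fps_padic_bound_def
proof
  fix m
  have "B' - int m * e' \<le> B - int m * e"
    using assms(2,3) mult_left_mono[OF assms(3), of "int m"] by linarith
  then show "padic_val_ge q (f $ m) (B' - int m * e')"
    using fps_padic_boundD[OF assms(1)] padic_val_ge_mono by blast
qed

lemma fps_padic_bound_mult:
  assumes q: "prime q" and f: "fps_padic_bound q B1 e f" and g: "fps_padic_bound q B2 e g"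
  shows "fps_padic_bound q (B1 + B2) e (f * g)"
  unfolding fps_padic_bound_def fps_mult_nth
proof (intro allI padic_val_ge_sum[OF q])
  fix m i :: nat
  assume "i \<in> {0..m}"
  then have "(B1 - int i * e) + (B2 - int (m - i) * e) = B1 + B2 - int m * e"
    by (simp add: algebra_simps)
  then show "padic_val_ge q (f $ i * g $ (m - i)) (B1 + B2 - int m * e)"
    using padic_val_ge_mult[OF q fps_padic_boundD[OF f] fps_padic_boundD[OF g]] by metis
qed

lemma fps_padic_bound_add:
  "prime q \<Longrightarrow> fps_padic_bound q B e f \<Longrightarrow> fps_padic_bound q B e g \<Longrightarrow> fps_padic_bound q B e (f + g)"
  unfolding fps_padic_bound_def by (auto intro: padic_val_ge_add)

lemma fps_padic_bound_sum:
  "prime q \<Longrightarrow> (\<And>a. a \<in> A \<Longrightarrow> fps_padic_bound q B e (f a)) \<Longrightarrow>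
     fps_padic_bound q B e (\<Sum>a\<in>A. f a)"
  unfolding fps_padic_bound_def by (auto simp: fps_sum_nth intro!: padic_val_ge_sum)

lemma fps_padic_bound_prod:
  assumes q: "prime q" and e: "0 \<le> e" and "\<And>a. a \<in> A \<Longrightarrow> fps_padic_bound q (B a) e (f a)"
  shows "fps_padic_bound q (\<Sum>a\<in>A. B a) e (\<Prod>a\<in>A. f a)"
  using assms(3)
proof (induction A rule: infinite_finite_induct)
  case (infinite A)
  then show ?case using e by (auto simp: fps_padic_bound_def padic_val_ge_def)
next
  case empty
  then show ?case using e by (auto simp: fps_padic_bound_def padic_val_ge_def)
qed (auto intro: fps_padic_bound_mult[OF q])

lemma fps_padic_bound_power:
  "prime q \<Longrightarrow> 0 \<le> e \<Longrightarrow> fps_padic_bound q B e f \<Longrightarrow> fps_padic_bound q (int k * B) e (f ^ k)"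
  using fps_padic_bound_prod[of q e "{..<k}" "\<lambda>_. B" "\<lambda>_. f"] by simp

lemma fps_padic_bound_const:
  "padic_val_ge q c B \<Longrightarrow> 0 \<le> e \<Longrightarrow> fps_padic_bound q B e (fps_const c)"
  unfolding fps_padic_bound_def by (auto intro: padic_val_ge_mono)

lemma fps_padic_bound_lin:
  assumes "padic_val_ge q a B" "padic_val_ge q b (B - e)" "0 \<le> e"
  shows "fps_padic_bound q B e (fps_lin a b)"
  unfolding fps_padic_bound_def
proof
  fix m
  show "padic_val_ge q (fps_lin a b $ m) (B - int m * e)"
    using assms by (cases m) (auto simp: fps_lin_def intro: padic_val_ge_mono)
qed

lemma inverse_fps_lin:
  assumes "c \<noteq> 0"
  shows "inverse (fps_lin c 1) = Abs_fps (\<lambda>m. (-1) ^ m / c ^ (m + 1))"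
proof (rule fps_inverse_unique, rule fps_ext)
  fix m
  show "(fps_lin c 1 * Abs_fps (\<lambda>m. (-1) ^ m / c ^ (m + 1))) $ m = 1 $ m"
    using assms by (cases m) (simp_all add: fps_lin_def distrib_right field_simps)
qed

lemma padic_val_inverse_fps_lin_nth:
  assumes q: "prime q" and c: "c \<noteq> 0"
  shows "padic_val q (inverse (fps_lin c 1) $ m) = - (int m + 1) * padic_val q c"
proof -
  have "padic_val q (inverse (fps_lin c 1) $ m) = padic_val q ((-1) ^ m) - padic_val q (c ^ (m + 1))"
    unfolding inverse_fps_lin[OF c] fps_nth_Abs_fps using q c by (intro padic_val_divide) auto
  then show ?thesis
    using q c by (simp add: padic_val_mult padic_val_power padic_val_uminus algebra_simps)
qed

lemma fps_padic_bound_inverse_lin: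
  assumes q: "prime q" and c: "c \<noteq> 0" and ce: "padic_val q c \<le> e"
  shows "fps_padic_bound q (- padic_val q c) e (inverse (fps_lin c 1))"
  unfolding fps_padic_bound_def padic_val_ge_def padic_val_inverse_fps_lin_nth[OF q c]
  using mult_left_mono[OF ce, of "int _"] by (auto simp: algebra_simps)

lemma fps_padic_bound_X_times_inverse_lin:
  assumes q: "prime q" and c: "c \<noteq> 0" and ce: "padic_val q c \<le> e"
  shows "fps_padic_bound q 0 e (fps_X * inverse (fps_lin c 1))"
  unfolding fps_padic_bound_def
proof
  fix m
  show "padic_val_ge q ((fps_X * inverse (fps_lin c 1)) $ m) (0 - int m * e)"
  proof (cases m)
    case (Suc k)
    have "(int k + 1) * padic_val q c \<le> (int k + 1) * e"
      using ce by (intro mult_left_mono) auto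
    with Suc show ?thesis
      by (simp add: padic_val_ge_def padic_val_inverse_fps_lin_nth[OF q c] algebra_simps)
  qed simp
qed

lemma padic_val_ge_scaled_coeff:
  assumes q: "prime q" and "fps_padic_bound q (padic_val q P) (padic_val q D) f"
    and "D \<noteq> 0" "P \<noteq> 0"
  shows "padic_val_ge q (D ^ m * f $ m / P) 0"
proof -
  have "padic_val_ge q (D ^ m) (int m * padic_val q D)"
    using assms(3) q by (simp add: padic_val_ge_def padic_val_power)
  from padic_val_ge_mult[OF q this fps_padic_boundD[OF assms(2), of m]]
  have "padic_val_ge q (D ^ m * f $ m) (padic_val q P)"
    by simp
  moreover have "padic_val_ge q (inverse P) (- padic_val q P)"
    by (simp add: padic_val_ge_def padic_val_inverse[OF q])
  ultimately have "padic_val_ge q (D ^ m * f $ m * inverse P) (padic_val q P + - padic_val q P)"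
    by (rule padic_val_ge_mult[OF q])
  then show ?thesis by (simp add: divide_inverse)
qed

section \<open>Partial fractions with poles at negative integers\<close>

definition taylor_shift :: "rat \<Rightarrow> rat poly \<Rightarrow> rat poly" where
  "taylor_shift c P = P \<circ>\<^sub>p [:c, 1:]"

lemma poly_taylor_shift [simp]: "poly (taylor_shift c P) x = poly P (c + x)"
  by (simp add: taylor_shift_def poly_pcompose)

lemma taylor_shift_taylor_shift [simp]: "taylor_shift a (taylor_shift b P) = taylor_shift (b + a) P"
  by (simp add: poly_eq_poly_eq_iff[symmetric] fun_eq_iff add.assoc)

lemma taylor_shift_0 [simp]: "taylor_shift 0 P = P"
  by (simp add: poly_eq_poly_eq_iff[symmetric] fun_eq_iff)

lemma taylor_shift_mult: "taylor_shift c (P * Q) = taylor_shift c P * taylor_shift c Q"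
  by (simp add: taylor_shift_def pcompose_mult)

lemma taylor_shift_diff: "taylor_shift c (P - Q) = taylor_shift c P - taylor_shift c Q"
  by (simp add: taylor_shift_def pcompose_diff)

lemma degree_taylor_shift [simp]: "degree (taylor_shift c P) = degree P"
  by (simp add: taylor_shift_def degree_pcompose)

lemma taylor_shift_monom: "taylor_shift c (monom 1 S) = [:c, 1:] ^ S"
  by (simp add: poly_eq_poly_eq_iff[symmetric] fun_eq_iff poly_monom add.commute)

lemma taylor_shift_eq_0_iff [simp]: "taylor_shift c P = 0 \<longleftrightarrow> P = 0"
  by (metis taylor_shift_taylor_shift taylor_shift_0 add.right_inverse taylor_shift_def pcompose_0)

definition pf_cofactor :: "nat set \<Rightarrow> nat \<Rightarrow> nat \<Rightarrow> rat poly" where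
  "pf_cofactor K S k = (\<Prod>l\<in>K-{k}. [:of_nat l, 1:] ^ S)"

text \<open>The expansion of \<open>A(t) / prod (l in K - {k}) (t + l)^S\<close> in powers of \<open>t + k\<close>; its
  coefficient \<open>S - i\<close> is the coefficient of \<open>(t + k)^(-i)\<close> in the partial fraction expansion.\<close>

definition pf_local_series :: "rat poly \<Rightarrow> nat set \<Rightarrow> nat \<Rightarrow> nat \<Rightarrow> rat fps" where
  "pf_local_series A K S k = fps_of_poly (taylor_shift (- of_nat k) A) *
     inverse (fps_of_poly (taylor_shift (- of_nat k) (pf_cofactor K S k)))"

lemma poly_pf_cofactor: "poly (pf_cofactor K S k) t = (\<Prod>l\<in>K-{k}. (t + of_nat l) ^ S)"
  by (simp add: pf_cofactor_def poly_prod add.commute)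

lemma degree_pf_cofactor:
  assumes "finite K" "k \<in> K"
  shows "degree (pf_cofactor K S k) = S * (card K - 1)"
  unfolding pf_cofactor_def using assms
  by (subst degree_prod_eq_sum_degree) (auto simp: degree_power_eq)

lemma coprime_linear_poly:
  assumes "a \<noteq> b"
  shows "coprime [:a, 1:] ([:b, 1:] :: rat poly)"
proof (rule coprimeI)
  fix c
  assume "c dvd [:a, 1:]" "c dvd [:b, 1:]"
  then have "c dvd [:a - b:]"
    using dvd_diff[of c "[:a, 1:]" "[:b, 1:]"] by simp
  moreover have "is_unit [:a - b:]"
    using assms by (simp add: is_unit_const_poly_iff dvd_field_iff)
  ultimately show "is_unit c" by (rule dvd_unit_imp_unit)
qed

lemma coprime_pf_cofactor: "finite K \<Longrightarrow> coprime ([:of_nat k, 1:] ^ S) (pf_cofactor K S k)"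
  unfolding pf_cofactor_def by (intro prod_coprime_right) (auto simp: coprime_linear_poly)

lemma linear_power_dvd_pf_sum_others:
  assumes "finite K" "k \<in> K"
  shows "[:of_nat k, 1:] ^ S dvd (\<Sum>l\<in>K-{k}. F l * pf_cofactor K S l)"
proof (rule dvd_sum)
  fix l
  assume "l \<in> K - {k}"
  then have "[:of_nat k, 1:] ^ S dvd pf_cofactor K S l"
    unfolding pf_cofactor_def using assms by (intro dvd_prodI) auto
  then show "[:of_nat k, 1:] ^ S dvd F l * pf_cofactor K S l" by simp
qed

lemma prod_dvd_if_coprime:
  assumes "finite K" "\<And>k. k \<in> K \<Longrightarrow> f k dvd (x :: rat poly)"
    "\<And>k l. k \<in> K \<Longrightarrow> l \<in> K \<Longrightarrow> k \<noteq> l \<Longrightarrow> coprime (f k) (f l)"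
  shows "prod f K dvd x"
  using assms
proof (induction K rule: finite_induct)
  case (insert a K)
  then have "coprime (f a) (prod f K)" by (intro prod_coprime_right) auto
  with insert show ?case by (simp add: divides_mult)
qed simp

lemma linear_power_dvd_pf_remainder:
  assumes "finite K"
  shows "[:of_nat k, 1:] ^ S dvd
    A - taylor_shift (of_nat k) (truncate_fps S (pf_local_series A K S k)) * pf_cofactor K S k"
    (is "_ dvd ?F")
proof -
  define W where "W = fps_of_poly (taylor_shift (- of_nat k) (pf_cofactor K S k))"
  define L where "L = pf_local_series A K S k"
  have "W $ 0 = poly (pf_cofactor K S k) (- of_nat k)"
    by (simp add: W_def poly_0_coeff_0[symmetric])
  then have W0: "W $ 0 \<noteq> 0"
    using assms by (simp add: poly_pf_cofactor)
  have "fps_of_poly (taylor_shift (- of_nat k) ?F) = (L - fps_cutoff S L) * W"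
    using inverse_mult_eq_1[OF W0]
    by (simp add: taylor_shift_diff taylor_shift_mult fps_of_poly_diff fps_of_poly_mult
        L_def W_def pf_local_series_def algebra_simps)
  then have "coeff (taylor_shift (- of_nat k) ?F) m = ((L - fps_cutoff S L) * W) $ m" for m
    by (metis fps_of_poly_nth)
  then have "coeff (taylor_shift (- of_nat k) ?F) m = 0" if "m < S" for m
    using that by (auto simp: fps_mult_nth intro!: sum.neutral)
  then obtain Q where "taylor_shift (- of_nat k) ?F = monom 1 S * Q"
    by (metis monom_1_dvd_iff' dvdE)
  then have "?F = [:of_nat k, 1:] ^ S * taylor_shift (of_nat k) Q"
    by (metis taylor_shift_taylor_shift taylor_shift_0 add.right_inverse taylor_shift_mult taylor_shift_monom)
  then show ?thesis by simp
qed

lemma pf_decomposition: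
  assumes K: "finite K" and S: "S > 0" and degA: "degree A < S * card K"
  shows "A = (\<Sum>k\<in>K. taylor_shift (of_nat k) (truncate_fps S (pf_local_series A K S k)) * pf_cofactor K S k)"
    (is "A = ?T")
proof -
  let ?P = "\<lambda>k. taylor_shift (of_nat k) (truncate_fps S (pf_local_series A K S k))"
  have "[:of_nat k, 1:] ^ S dvd A - ?T" if k: "k \<in> K" for k
  proof -
    have "A - ?T = (A - ?P k * pf_cofactor K S k) - (\<Sum>l\<in>K-{k}. ?P l * pf_cofactor K S l)"
      using K k by (simp add: sum.remove)
    then show ?thesis
      using dvd_diff[OF linear_power_dvd_pf_remainder[OF K, of k S A]
          linear_power_dvd_pf_sum_others[OF K k, of S ?P]]
      by (simp only:)
  qed
  then have dvd: "(\<Prod>k\<in>K. [:of_nat k, 1:] ^ S) dvd A - ?T"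
    by (intro prod_dvd_if_coprime[OF K]) (auto simp: coprime_linear_poly)
  have "card K \<ge> 1" using K degA by (auto simp: Suc_le_eq card_gt_0_iff)
  have "degree ?T \<le> (S - 1) + S * (card K - 1)"
  proof (rule degree_sum_le[OF K])
    fix k
    assume k: "k \<in> K"
    have "degree (?P k) \<le> S - 1"
      using degree_truncate_fps[OF S, of "pf_local_series A K S k"] by simp
    then show "degree (?P k * pf_cofactor K S k) \<le> S - 1 + S * (card K - 1)"
      using degree_mult_le[of "?P k" "pf_cofactor K S k"] degree_pf_cofactor[OF K k, of S] by linarith
  qed
  also have "\<dots> < S * card K"
    using S \<open>card K \<ge> 1\<close> by (cases "card K") (simp_all add: algebra_simps)
  finally have "degree (A - ?T) < S * card K"
    using degA degree_diff_le_max[of A ?T] by linarith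
  moreover have "degree (\<Prod>k\<in>K. [:of_nat k, 1:] ^ S :: rat poly) = S * card K"
    by (subst degree_prod_eq_sum_degree) (auto simp: degree_power_eq)
  ultimately have "A - ?T = 0"
    using dvd_imp_degree_le[OF dvd] by fastforce
  then show ?thesis by simp
qed

lemma poly_div_power_eq_sum:
  fixes P :: "rat poly"
  assumes "degree P < S" "y \<noteq> 0"
  shows "poly P y / y ^ S = (\<Sum>i=1..S. coeff P (S - i) / y ^ i)"
proof -
  have "poly P y = (\<Sum>m\<le>degree P. coeff P m * y ^ m)"
    by (rule poly_altdef)
  also have "\<dots> = (\<Sum>m<S. coeff P m * y ^ m)"
    using assms(1) by (intro sum.mono_neutral_left) (auto simp: coeff_eq_0)
  finally have "poly P y = (\<Sum>m<S. coeff P m * y ^ m)" .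
  then have "poly P y / y ^ S = (\<Sum>m<S. coeff P m * y ^ m / (y ^ m * y ^ (S - m)))"
    by (simp add: sum_divide_distrib flip: power_add)
  also have "\<dots> = (\<Sum>m<S. coeff P m / y ^ (S - m))"
    using assms(2) by simp
  also have "\<dots> = (\<Sum>i=1..S. coeff P (S - i) / y ^ i)"
    by (rule sum.reindex_bij_witness[of _ "\<lambda>i. S - i" "\<lambda>m. S - m"]) auto
  finally show ?thesis .
qed

lemma poly_pf_sum_div:
  assumes K: "finite K" and t: "\<forall>k\<in>K. t + of_nat k \<noteq> 0" and Q: "\<forall>k\<in>K. degree (Q k) < S"
  shows "poly (\<Sum>k\<in>K. taylor_shift (of_nat k) (Q k) * pf_cofactor K S k) t / (\<Prod>k\<in>K. (t + of_nat k) ^ S)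
    = (\<Sum>i=1..S. \<Sum>k\<in>K. coeff (Q k) (S - i) / (t + of_nat k) ^ i)"
proof -
  have "poly (taylor_shift (of_nat k) (Q k) * pf_cofactor K S k) t / (\<Prod>k\<in>K. (t + of_nat k) ^ S)
      = (\<Sum>i=1..S. coeff (Q k) (S - i) / (t + of_nat k) ^ i)" if k: "k \<in> K" for k
  proof -
    have "(\<Prod>k\<in>K. (t + of_nat k) ^ S) = (t + of_nat k) ^ S * poly (pf_cofactor K S k) t"
      using K k by (simp add: poly_pf_cofactor prod.remove)
    moreover have "poly (pf_cofactor K S k) t \<noteq> 0"
      using K t by (simp add: poly_pf_cofactor)
    ultimately show ?thesis
      using poly_div_power_eq_sum[of "Q k" S "t + of_nat k"] Q t k by (simp add: add.commute)
  qed
  then show ?thesis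
    by (simp add: poly_sum sum_divide_distrib cong: sum.cong) (rule sum.swap)
qed

lemma partial_fraction_expansion:
  fixes A :: "rat poly"
  assumes K: "finite K" and S: "S > 0" and degA: "degree A < S * card K"
    and t: "\<forall>k\<in>K. t + of_nat k \<noteq> 0"
  shows "poly A t / (\<Prod>k\<in>K. (t + of_nat k) ^ S) =
    (\<Sum>i=1..S. \<Sum>k\<in>K. pf_local_series A K S k $ (S - i) / (t + of_nat k) ^ i)"
  by (subst pf_decomposition[OF K S degA], subst poly_pf_sum_div[OF K t])
     (auto simp: degree_truncate_fps[OF S] coeff_truncate_fps intro!: sum.cong)

lemma partial_fraction_unique:
  fixes c :: "nat \<Rightarrow> nat \<Rightarrow> rat"
  assumes K: "finite K" and Fin: "finite Fin" and KF: "\<forall>k\<in>K. - of_nat k \<in> Fin"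
    and zero: "\<forall>t. t \<notin> Fin \<longrightarrow> (\<Sum>i=1..S. \<Sum>k\<in>K. c i k / (t + of_nat k) ^ i) = 0"
    and i: "i \<in> {1..S}" and k: "k \<in> K"
  shows "c i k = 0"
proof -
  define Q where "Q k = (\<Sum>i=1..S. monom (c i k) (S - i))" for k
  have degQ: "degree (Q k) < S" for k
    unfolding Q_def using i
    by (intro degree_sum_less) (auto intro: le_less_trans[OF degree_monom_le])
  have coeffQ: "coeff (Q k) (S - i) = c i k" if "i \<in> {1..S}" for i k
  proof -
    have "coeff (Q k) (S - i) = (\<Sum>i'\<in>{1..S}. if i' = i then c i' k else 0)"
      unfolding Q_def coeff_sum coeff_monom using that by (intro sum.cong) auto
    then show ?thesis using that by simp
  qed
  define Z where "Z = (\<Sum>k\<in>K. taylor_shift (of_nat k) (Q k) * pf_cofactor K S k)"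
  have "poly Z t = 0" if t: "t \<notin> Fin" for t
  proof -
    have tk: "\<forall>k\<in>K. t + of_nat k \<noteq> 0"
      using KF t by (auto simp: add_eq_0_iff)
    then have "poly Z t / (\<Prod>k\<in>K. (t + of_nat k) ^ S) = 0"
      unfolding Z_def using zero t degQ coeffQ
      by (subst poly_pf_sum_div[OF K]) (auto intro!: sum.cong)
    with tk K show ?thesis by simp
  qed
  then have "UNIV \<subseteq> Fin \<union> {t. poly Z t = 0}" by blast
  then have "Z = 0"
    using Fin infinite_UNIV_char_0[where 'a = rat] poly_roots_finite[of Z] finite_subset by auto
  then have "[:of_nat k, 1:] ^ S dvd taylor_shift (of_nat k) (Q k) * pf_cofactor K S k"
    using linear_power_dvd_pf_sum_others[OF K k, of S "\<lambda>l. taylor_shift (of_nat l) (Q l)"]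
      K k by (simp add: Z_def sum.remove eq_neg_iff_add_eq_0[symmetric])
  then have dvd: "[:of_nat k, 1:] ^ S dvd taylor_shift (of_nat k) (Q k)"
    using coprime_pf_cofactor[OF K] by (simp add: coprime_dvd_mult_left_iff)
  have "taylor_shift (of_nat k) (Q k) = 0"
    using dvd_imp_degree_le[OF dvd] degQ[of k] by (fastforce simp: degree_power_eq)
  then show ?thesis using coeffQ[OF i, of k] by simp
qed

section \<open>The partial fraction coefficients of \<open>R\<^sub>n\<close>\<close>

definition R_numerator :: "nat \<Rightarrow> nat \<Rightarrow> nat \<Rightarrow> rat poly" where
  "R_numerator p s n = smult (of_nat (p ^ n * fact n ^ s))
     ([:0, 1:] ^ (M0 p s - (p - 1 + s)) * (\<Prod>j\<in>{1..p-1}. \<Prod>u<n. [:of_nat (j + p * u), of_nat p:]))"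

lemma poly_R_numerator:
  "poly (R_numerator p s n) t = of_nat (p ^ n * fact n ^ s) * t ^ (M0 p s - (p - 1 + s)) *
     (\<Prod>j\<in>{1..p-1}. \<Prod>u<n. (of_nat (j + p * u) + of_nat p * t))"
  by (simp add: R_numerator_def poly_prod mult.commute)

lemma degree_R_numerator: "degree (R_numerator p s n) \<le> (M0 p s - (p - 1 + s)) + (p - 1) * n"
proof -
  have "degree (\<Prod>u<n. [:of_nat (j + p * u), of_nat p:] :: rat poly) \<le> (\<Sum>u<n. 1)" for j
    by (rule order_trans[OF degree_prod_sum_le sum_mono]) (auto simp: degree_pCons_le)
  then have "degree (\<Prod>j\<in>{1..p-1}. \<Prod>u<n. [:of_nat (j + p * u), of_nat p:] :: rat poly) \<le> (\<Sum>j\<in>{1..p-1}. n)"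
    by (intro order_trans[OF degree_prod_sum_le sum_mono]) auto
  then show ?thesis
    unfolding R_numerator_def
    by (intro order.trans[OF degree_smult_le] order.trans[OF degree_mult_le])
       (simp add: degree_power_eq)
qed

lemma pochhammer_Suc_eq_prod: "pochhammer (t::rat) (Suc n) = t * (\<Prod>k=1..n. t + of_nat k)"
proof -
  have "pochhammer (t + 1) n = (\<Prod>k=1..n. t + of_nat k)"
    unfolding pochhammer_prod
    by (rule prod.reindex_bij_witness[of _ "\<lambda>k. k - 1" "\<lambda>i. i + 1"]) (auto simp: add.assoc)
  then show ?thesis by (simp add: pochhammer_rec)
qed

lemma power_times_pochhammer_shifted:
  assumes "p > 0"
  shows "of_nat p ^ n * pochhammer (t + of_nat j / of_nat p) n =
    (\<Prod>u<n. of_nat (j + p * u) + of_nat p * (t::rat))"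
proof -
  have "of_nat p ^ n * pochhammer (t + of_nat j / of_nat p) n =
      (\<Prod>u<n. of_nat p * (t + of_nat j / of_nat p + of_nat u))"
    by (simp add: pochhammer_prod atLeast0LessThan prod.distrib)
  also have "\<dots> = (\<Prod>u<n. of_nat (j + p * u) + of_nat p * t)"
    using assms by (intro prod.cong) (simp_all add: distrib_left)
  finally show ?thesis .
qed

lemma Rfun_eq_poly_div:
  assumes "p > 0" and "M0 p s \<ge> p - 1 + s" and "t \<noteq> 0"
  shows "Rfun p s n t = poly (R_numerator p s n) t / (\<Prod>k=1..n. (t + of_nat k) ^ (p - 1 + s))"
proof -
  define S where "S = p - 1 + s"
  define a where "a = M0 p s - S"
  have M0: "M0 p s = a + S" using assms(2) by (simp add: a_def S_def)
  have pn: "(of_nat p :: rat) ^ (p * n) = of_nat p ^ n * (of_nat p ^ n) ^ (p - 1)"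
  proof -
    have "p * n = n + n * (p - 1)" using assms(1) by (cases p) auto
    then show ?thesis by (simp add: power_add power_mult)
  qed
  have num: "(of_nat p ^ n) ^ (p - 1) * (\<Prod>j=1..p-1. pochhammer (t + of_nat j / of_nat p) n) =
      (\<Prod>j=1..p-1. \<Prod>u<n. of_nat (j + p * u) + of_nat p * t)"
  proof -
    have "(of_nat p ^ n) ^ (p - 1) * (\<Prod>j=1..p-1. pochhammer (t + of_nat j / of_nat p) n) =
        (\<Prod>j=1..p-1. of_nat p ^ n * pochhammer (t + of_nat j / of_nat p) n)"
      by (simp add: prod.distrib)
    then show ?thesis by (simp only: power_times_pochhammer_shifted[OF assms(1)])
  qed
  have den: "pochhammer t (n + 1) ^ S = t ^ S * (\<Prod>k=1..n. (t + of_nat k) ^ S)"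
    by (simp add: pochhammer_Suc_eq_prod power_mult_distrib prod_power_distrib)
  have "Rfun p s n t = of_nat p ^ n * fact n ^ s * t ^ (a + S) * ((of_nat p ^ n) ^ (p - 1) *
      (\<Prod>j=1..p-1. pochhammer (t + of_nat j / of_nat p) n)) / pochhammer t (n + 1) ^ S"
    unfolding Rfun_def S_def[symmetric] M0 pn by (simp add: mult.assoc)
  also have "\<dots> = of_nat p ^ n * fact n ^ s * t ^ a *
      (\<Prod>j=1..p-1. \<Prod>u<n. of_nat (j + p * u) + of_nat p * t) / (\<Prod>k=1..n. (t + of_nat k) ^ S)"
    unfolding num den using assms(3) by (simp add: power_add)
  also have "\<dots> = poly (R_numerator p s n) t / (\<Prod>k=1..n. (t + of_nat k) ^ S)"
    unfolding poly_R_numerator a_def S_def by simp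
  finally show ?thesis unfolding S_def .
qed

lemma M0_bounds:
  assumes "p \<ge> 2" and "s > 0" and "n > (p + s) ^ 4"
  shows "p - 1 + s \<le> M0 p s" "M0 p s < s * n"
proof -
  have "p ^ N0 p s dvd p - 1 + s" unfolding N0_def by (rule multiplicity_dvd)
  then have pN: "p ^ N0 p s \<le> p + s" using assms(2) by (auto dest: dvd_imp_le)
  have M0: "M0 p s + 1 = p ^ 2 * p ^ N0 p s * s"
    using assms(1,2) by (simp add: M0_def power_add power2_eq_square)
  have "p \<le> p * s" "s \<le> p * s"
    using assms(1,2) by simp_all
  then have "p + s \<le> 2 * (p * s)" by linarith
  also have "\<dots> \<le> p ^ 2 * s"
    using assms(1) by (simp add: power2_eq_square)
  also have "\<dots> \<le> p ^ 2 * p ^ N0 p s * s" using assms(1) by simp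
  finally show "p - 1 + s \<le> M0 p s" using M0 assms(1) by linarith
  have "p ^ 2 * p ^ N0 p s \<le> (p + s) ^ 2 * (p + s)"
    using pN by (intro mult_mono power_mono) auto
  also have "\<dots> \<le> (p + s) ^ 4"
    using assms(1) by (simp add: power_increasing flip: power_Suc2)
  finally have "p ^ 2 * p ^ N0 p s < n" using assms(3) by linarith
  then have "p ^ 2 * p ^ N0 p s * s < n * s" using assms(2) by simp
  then have "M0 p s + 1 < n * s" using M0 by linarith
  then show "M0 p s < s * n" by (simp add: mult.commute)
qed

lemma Rfun_partial_fractions:
  assumes "p \<ge> 2" "s > 0" "n > (p + s) ^ 4" and t: "\<forall>k\<in>{0..n}. t \<noteq> - of_nat k"
  shows "Rfun p s n t = (\<Sum>i=1..p-1+s. \<Sum>k=1..n.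
    pf_local_series (R_numerator p s n) {1..n} (p - 1 + s) k $ (p - 1 + s - i) / (t + of_nat k) ^ i)"
proof -
  note M0 = M0_bounds[OF assms(1-3)]
  have "degree (R_numerator p s n) < (p - 1 + s) * card {1..n}"
    using degree_R_numerator[of p s n] M0 by (simp add: algebra_simps)
  moreover have "\<forall>k\<in>{1..n}. t + of_nat k \<noteq> 0" "t \<noteq> 0"
    using t by (auto simp flip: eq_neg_iff_add_eq_0)
  ultimately show ?thesis
    using assms(1,2) M0(1)
    by (simp add: Rfun_eq_poly_div partial_fraction_expansion)
qed

lemma pf_coeff_eq_pf_local_series:
  assumes "p \<ge> 2" "s > 0" "n > (p + s) ^ 4" and i: "i \<in> {1..p - 1 + s}" and k: "k \<in> {1..n}"
  shows "pf_coeff p s n i k = pf_local_series (R_numerator p s n) {1..n} (p - 1 + s) k $ (p - 1 + s - i)"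
proof -
  define S where "S = p - 1 + s"
  define r where "r i k = (if i \<in> {1..S} \<and> k \<in> {1..n}
    then pf_local_series (R_numerator p s n) {1..n} S k $ (S - i) else 0)" for i k
  define P where "P r \<longleftrightarrow> (\<forall>i k. (i \<notin> {1..S} \<or> k \<notin> {1..n}) \<longrightarrow> r i k = 0) \<and>
      (\<forall>t::rat. (\<forall>k\<in>{0..n}. t \<noteq> - of_nat k) \<longrightarrow>
         Rfun p s n t = (\<Sum>i=1..S. \<Sum>k=1..n. r i k / (t + of_nat k) ^ i))" for r
  have "P r"
    unfolding P_def using Rfun_partial_fractions[OF assms(1-3)]
    by (auto simp: r_def S_def intro!: sum.cong)
  moreover have "r' = r" if "P r'" for r'
  proof (intro ext)
    fix i k
    show "r' i k = r i k"
    proof (cases "i \<in> {1..S} \<and> k \<in> {1..n}")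
      case True
      define Fin where "Fin = (\<lambda>k. - (of_nat k :: rat)) ` {0..n}"
      have "r' i k - r i k = 0"
      proof (rule partial_fraction_unique[where c = "\<lambda>i k. r' i k - r i k" and K = "{1..n}" and Fin = Fin])
        show "\<forall>t. t \<notin> Fin \<longrightarrow> (\<Sum>i=1..S. \<Sum>k\<in>{1..n}. (r' i k - r i k) / (t + of_nat k) ^ i) = 0"
          using \<open>P r\<close> \<open>P r'\<close> unfolding P_def
          by (auto simp: Fin_def diff_divide_distrib sum_subtractf)
      qed (use True in \<open>auto simp: Fin_def\<close>)
      then show ?thesis by simp
    qed (use \<open>P r\<close> \<open>P r'\<close> in \<open>auto simp: P_def\<close>)
  qed
  ultimately have "pf_coeff p s n = r"
    unfolding pf_coeff_def S_def[symmetric] P_def[symmetric] by (rule the_equality)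
  then show ?thesis using i k by (simp add: r_def S_def)
qed

text \<open>The expansions in powers of \<open>t + k\<close> of \<open>1 / prod (l \<noteq> k) (t + l)\<close> (the cofactor) and of
  \<open>p^n (t + j/p)_n = prod (u < n) (j + p u + p t)\<close>.\<close>

definition cofactor_inverse_fps :: "nat \<Rightarrow> nat \<Rightarrow> rat fps" where
  "cofactor_inverse_fps n k = (\<Prod>l\<in>{1..n}-{k}. inverse (fps_lin (of_int (int l - int k)) 1))"

definition progression_fps :: "nat \<Rightarrow> nat \<Rightarrow> nat \<Rightarrow> nat \<Rightarrow> rat fps" where
  "progression_fps p n k j = (\<Prod>u<n. fps_lin (of_int (int j + int p * (int u - int k))) (of_nat p))"

lemma taylor_shift_R_numerator:
  "taylor_shift (- of_nat k) (R_numerator p s n) = smult (of_nat (p ^ n * fact n ^ s))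
     ([:- of_nat k, 1:] ^ (M0 p s - (p - 1 + s)) *
      (\<Prod>j\<in>{1..p-1}. \<Prod>u<n. [:of_int (int j + int p * (int u - int k)), of_nat p:]))"
proof -
  have "(\<Prod>j\<in>{1..p-1}. \<Prod>u<n. of_nat (j + p * u) + of_nat p * (- of_nat k + x)) =
      (\<Prod>j\<in>{1..p-1}. \<Prod>u<n. poly [:of_int (int j + int p * (int u - int k)), of_nat p:] (x::rat))" for x
    by (intro prod.cong refl) (simp add: algebra_simps)
  then show ?thesis
    by (simp add: poly_eq_poly_eq_iff[symmetric] fun_eq_iff poly_R_numerator poly_prod)
qed

lemma taylor_shift_pf_cofactor:
  "taylor_shift (- of_nat k) (pf_cofactor {1..n} S k) = (\<Prod>l\<in>{1..n}-{k}. [:of_int (int l - int k), 1:] ^ S)"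
  by (simp add: poly_eq_poly_eq_iff[symmetric] fun_eq_iff poly_pf_cofactor poly_prod algebra_simps)

lemma pf_local_series_R_numerator:
  "pf_local_series (R_numerator p s n) {1..n} (p - 1 + s) k =
    fps_const (of_nat p ^ n) * fps_lin (- of_nat k) 1 ^ (M0 p s - (p - 1 + s)) *
    (\<Prod>j\<in>{1..p-1}. progression_fps p n k j * cofactor_inverse_fps n k) *
    (fps_const (fact n) * cofactor_inverse_fps n k) ^ s"
proof -
  have num: "fps_of_poly (taylor_shift (- of_nat k) (R_numerator p s n)) =
      fps_const (of_nat p ^ n) * fps_const (fact n) ^ s * fps_lin (- of_nat k) 1 ^ (M0 p s - (p - 1 + s)) *
      (\<Prod>j\<in>{1..p-1}. progression_fps p n k j)"
    unfolding taylor_shift_R_numerator fps_of_poly_smult fps_of_poly_mult fps_of_poly_power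
      fps_of_poly_prod fps_of_poly_linear progression_fps_def
    by (simp add: mult.assoc)
  have den: "inverse (fps_of_poly (taylor_shift (- of_nat k) (pf_cofactor {1..n} (p - 1 + s) k))) =
      cofactor_inverse_fps n k ^ (p - 1 + s)"
    unfolding taylor_shift_pf_cofactor fps_of_poly_prod fps_of_poly_power fps_of_poly_linear
      inverse_fps_prod fps_inverse_power cofactor_inverse_fps_def
    by (simp add: prod_power_distrib)
  have prod: "(\<Prod>j\<in>{1..p-1}. progression_fps p n k j * cofactor_inverse_fps n k) =
      (\<Prod>j\<in>{1..p-1}. progression_fps p n k j) * cofactor_inverse_fps n k ^ (p - 1)"
    by (simp add: prod.distrib)
  show ?thesis
    unfolding pf_local_series_def num den prod
    by (simp add: power_mult_distrib power_add mult_ac)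
qed

section \<open>Valuations of factorials and of the node differences\<close>

lemma multiplicity_fact_rec:
  assumes p: "prime p"
  shows "multiplicity p (fact m :: nat) = m div p + multiplicity p (fact (m div p) :: nat)"
proof (induction m)
  case (Suc m)
  have p1: "p > 1" using prime_gt_1_nat[OF p] .
  have "multiplicity p (Suc x * fact x :: nat) = multiplicity p (Suc x) + multiplicity p (fact x :: nat)" for x
    using p by (intro prime_elem_multiplicity_mult_distrib) auto
  then have mult_fact: "multiplicity p (fact (Suc x) :: nat) = multiplicity p (Suc x) + multiplicity p (fact x :: nat)" for x
    by (simp only: fact_Suc of_nat_id)
  show ?case
  proof (cases "p dvd Suc m")
    case False
    then have "multiplicity p (Suc m) = 0" "Suc m div p = m div p"
      by (simp_all add: not_dvd_imp_multiplicity_0 div_Suc dvd_eq_mod_eq_0)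
    with Suc.IH show ?thesis unfolding mult_fact by simp
  next
    case True
    then have c1: "Suc m div p = Suc (m div p)" by (simp add: div_Suc)
    have c: "Suc m div p = Suc (m div p)" "Suc m = p * Suc (m div p)"
      using c1 dvd_mult_div_cancel[OF True] by simp_all
    have "multiplicity p (Suc m) = Suc (multiplicity p (Suc (m div p)))"
      unfolding c(2) using p by (intro multiplicity_times_same) auto
    with Suc.IH show ?thesis unfolding c(1) mult_fact by simp
  qed
qed simp

lemma multiplicity_fact_le:
  assumes p: "prime p"
  shows "(p - 1) * multiplicity p (fact m :: nat) \<le> m"
proof (induction m rule: less_induct)
  case (less m)
  show ?case
  proof (cases "m = 0")
    case False
    then have "m div p < m" using prime_gt_1_nat[OF p] by simp
    have "(p - 1) * multiplicity p (fact m :: nat) =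
        (p - 1) * (m div p) + (p - 1) * multiplicity p (fact (m div p) :: nat)"
      by (subst multiplicity_fact_rec[OF p]) (simp add: algebra_simps)
    also have "\<dots> \<le> (p - 1) * (m div p) + m div p"
      using less[OF \<open>m div p < m\<close>] by simp
    also have "\<dots> = p * (m div p)"
      using prime_gt_1_nat[OF p] by (simp add: algebra_simps)
    also have "\<dots> \<le> m" by simp
    finally show ?thesis .
  qed simp
qed

lemma multiplicity_fact_eq_div:
  assumes q: "prime q" and "n < q * q"
  shows "multiplicity q (fact n :: nat) = n div q"
proof -
  have "n div q < q" using assms by (simp add: div_less_iff_less_mult prime_gt_0_nat)
  then have "multiplicity q (fact (n div q) :: nat) = 0"
    using q by (simp add: not_dvd_imp_multiplicity_0 prime_dvd_fact_iff)
  then show ?thesis using multiplicity_fact_rec[OF q, of n] by simp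
qed

lemma multiplicity_abs_int: "multiplicity r \<bar>x\<bar> = multiplicity r (x :: int)"
  using multiplicity_normalize_right[of r x] by simp

lemma prod_abs_node_diffs:
  assumes k: "k \<in> {1..n}"
  shows "(\<Prod>l\<in>{1..n}-{k}. \<bar>int l - int k\<bar>) = int (fact (k - 1) * fact (n - k))"
proof -
  have "{1..n}-{k} = {1..k-1} \<union> {k+1..n}" using k by auto
  then have "(\<Prod>l\<in>{1..n}-{k}. \<bar>int l - int k\<bar>) =
      (\<Prod>l\<in>{1..k-1}. \<bar>int l - int k\<bar>) * (\<Prod>l\<in>{k+1..n}. \<bar>int l - int k\<bar>)"
    by (simp add: prod.union_disjoint)
  also have "(\<Prod>l\<in>{1..k-1}. \<bar>int l - int k\<bar>) = (\<Prod>i=1..k-1. int i)"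
    by (rule prod.reindex_bij_witness[of _ "\<lambda>i. k - i" "\<lambda>l. k - l"]) auto
  also have "(\<Prod>l\<in>{k+1..n}. \<bar>int l - int k\<bar>) = (\<Prod>i=1..n-k. int i)"
    by (rule prod.reindex_bij_witness[of _ "\<lambda>i. i + k" "\<lambda>l. l - k"]) auto
  finally show ?thesis by (simp add: fact_prod)
qed

lemma padic_val_node_diffs:
  assumes q: "prime q" and k: "k \<in> {1..n}"
  shows "(\<Sum>l\<in>{1..n}-{k}. padic_val q (of_int (int l - int k))) =
    int (multiplicity q (fact (k - 1) * fact (n - k) :: nat))"
proof -
  have "(\<Sum>l\<in>{1..n}-{k}. padic_val q (of_int (int l - int k))) =
      padic_val q (\<Prod>l\<in>{1..n}-{k}. of_int (int l - int k))"
    by (rule padic_val_prod[OF q, symmetric]) auto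
  also have "\<dots> = padic_val q (of_int (\<Prod>l\<in>{1..n}-{k}. int l - int k))"
    by simp
  also have "\<dots> = int (multiplicity (int q) (\<Prod>l\<in>{1..n}-{k}. int l - int k))"
    by (rule padic_val_of_int[OF q]) simp
  also have "multiplicity (int q) (\<Prod>l\<in>{1..n}-{k}. int l - int k) =
      multiplicity (int q) \<bar>\<Prod>l\<in>{1..n}-{k}. int l - int k\<bar>"
    by (simp only: multiplicity_abs_int)
  also have "\<bar>\<Prod>l\<in>{1..n}-{k}. int l - int k\<bar> = int (fact (k - 1) * fact (n - k))"
    by (simp only: abs_prod prod_abs_node_diffs[OF k])
  finally show ?thesis by (simp only: multiplicity_of_nat_of_nat)
qed

lemma multiplicity_node_diffs_le:
  assumes k: "k \<in> {1..n}"
  shows "multiplicity q (fact (k - 1) * fact (n - k) :: nat) \<le> multiplicity q (fact (n - 1) :: nat)"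
    and "multiplicity q (fact (k - 1) * fact (n - k) :: nat) \<le> multiplicity q (fact n :: nat)"
proof -
  have "fact (k - 1) * fact (n - 1 - (k - 1)) * (n - 1 choose (k - 1)) = (fact (n - 1) :: nat)"
    using k by (intro binomial_fact_lemma) auto
  moreover have "n - 1 - (k - 1) = n - k" using k by auto
  ultimately have "fact (k - 1) * fact (n - k) dvd (fact (n - 1) :: nat)"
    by (metis dvd_triv_left)
  then show le: "multiplicity q (fact (k - 1) * fact (n - k) :: nat) \<le> multiplicity q (fact (n - 1) :: nat)"
    by (rule dvd_imp_multiplicity_le) simp
  also have "multiplicity q (fact (n - 1) :: nat) \<le> multiplicity q (fact n :: nat)"
    by (rule dvd_imp_multiplicity_le) (simp_all add: fact_dvd)
  finally show "multiplicity q (fact (k - 1) * fact (n - k) :: nat) \<le> multiplicity q (fact n :: nat)" .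
qed

lemma padic_val_node_diff_le_dlcm:
  assumes q: "prime q" and "k \<in> {1..n}" "l \<in> {1..n}-{k}"
  shows "padic_val q (of_int (int l - int k)) \<le> padic_val q (of_nat (dlcm n))"
proof -
  have "nat \<bar>int l - int k\<bar> \<in> {1..n}"
    using assms by auto
  then have "nat \<bar>int l - int k\<bar> dvd dlcm n"
    unfolding dlcm_def by (rule dvd_Lcm)
  then have "multiplicity q (nat \<bar>int l - int k\<bar>) \<le> multiplicity q (dlcm n)"
    by (rule dvd_imp_multiplicity_le) (simp add: dlcm_def Lcm_0_iff)
  moreover have "multiplicity (int q) (int l - int k) = multiplicity q (nat \<bar>int l - int k\<bar>)"
    by (simp flip: multiplicity_of_nat_of_nat add: multiplicity_abs_int)
  moreover have "padic_val q (of_int (int l - int k)) = int (multiplicity (int q) (int l - int k))"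
    using assms by (intro padic_val_of_int) auto
  moreover have "padic_val q (of_nat (dlcm n)) = int (multiplicity q (dlcm n))"
    using q by (intro padic_val_of_nat) (simp_all add: dlcm_def Lcm_0_iff)
  ultimately show ?thesis by simp
qed

section \<open>Valuation bounds for the local expansions\<close>

lemma fps_padic_bound_cofactor_inverse:
  assumes q: "prime q" and k: "k \<in> {1..n}" and e: "0 \<le> e"
    and le: "\<And>l. l \<in> {1..n}-{k} \<Longrightarrow> padic_val q (of_int (int l - int k)) \<le> e"
  shows "fps_padic_bound q (- int (multiplicity q (fact (k - 1) * fact (n - k) :: nat))) e
    (cofactor_inverse_fps n k)"
proof -
  have "fps_padic_bound q (\<Sum>l\<in>{1..n}-{k}. - padic_val q (of_int (int l - int k))) e
      (cofactor_inverse_fps n k)"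
    unfolding cofactor_inverse_fps_def
    by (rule fps_padic_bound_prod[OF q e]) (use le in \<open>auto intro!: fps_padic_bound_inverse_lin[OF q]\<close>)
  then show ?thesis
    using padic_val_node_diffs[OF q k] by (simp add: sum_negf)
qed

lemma fps_padic_bound_pf_local_series:
  assumes q: "prime q" and k: "k \<in> {1..n}" and e: "0 \<le> e"
    and le: "\<And>l. l \<in> {1..n}-{k} \<Longrightarrow> padic_val q (of_int (int l - int k)) \<le> e"
    and prog: "\<And>j. j \<in> {1..p-1} \<Longrightarrow>
      fps_padic_bound q (B j) e (progression_fps p n k j * cofactor_inverse_fps n k)"
  shows "fps_padic_bound q (padic_val q (of_nat p ^ n) + (\<Sum>j\<in>{1..p-1}. B j)) e
    (pf_local_series (R_numerator p s n) {1..n} (p - 1 + s) k)"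
proof -
  have pn: "fps_padic_bound q (padic_val q (of_nat p ^ n)) e (fps_const (of_nat p ^ n))"
    using e by (intro fps_padic_bound_const) (simp_all add: padic_val_ge_def)
  have "fps_padic_bound q 0 e (fps_lin (- of_nat k) 1)"
    using e padic_val_ge_of_int[OF q, of "- int k"] by (intro fps_padic_bound_lin) (auto simp: padic_val_ge_def)
  then have lin: "fps_padic_bound q 0 e (fps_lin (- of_nat k) 1 ^ (M0 p s - (p - 1 + s)))"
    using fps_padic_bound_power[OF q e] by fastforce
  have "fps_padic_bound q (int (multiplicity q (fact n :: nat))) e (fps_const (fact n))"
    using e padic_val_of_nat[OF q, of "fact n"] by (intro fps_padic_bound_const) (simp_all add: padic_val_ge_def)
  then have "fps_padic_bound q (int (multiplicity q (fact n :: nat)) +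
      - int (multiplicity q (fact (k - 1) * fact (n - k) :: nat))) e (fps_const (fact n) * cofactor_inverse_fps n k)"
    by (rule fps_padic_bound_mult[OF q _ fps_padic_bound_cofactor_inverse[OF q k e le]])
  then have "fps_padic_bound q 0 e (fps_const (fact n) * cofactor_inverse_fps n k)"
    by (rule fps_padic_bound_mono) (use multiplicity_node_diffs_le(2)[OF k, of q] in auto)
  then have fact: "fps_padic_bound q 0 e ((fps_const (fact n) * cofactor_inverse_fps n k) ^ s)"
    using fps_padic_bound_power[OF q e] by fastforce
  have "fps_padic_bound q (\<Sum>j\<in>{1..p-1}. B j) e
      (\<Prod>j\<in>{1..p-1}. progression_fps p n k j * cofactor_inverse_fps n k)"
    using prog by (rule fps_padic_bound_prod[OF q e])
  from fps_padic_bound_mult[OF q fps_padic_bound_mult[OF q fps_padic_bound_mult[OF q pn lin] this] fact]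
  show ?thesis
    unfolding pf_local_series_R_numerator by simp
qed

subsection \<open>The prime \<open>p\<close>\<close>

lemma fps_padic_bound_progression:
  assumes q: "prime q" and e: "0 \<le> e"
  shows "fps_padic_bound q 0 e (progression_fps p n k j)"
proof -
  have "fps_padic_bound q (\<Sum>u<n. 0) e (progression_fps p n k j)"
    unfolding progression_fps_def
    by (intro fps_padic_bound_prod[OF q e] fps_padic_bound_lin padic_val_ge_of_int[OF q] e
        padic_val_ge_mono[OF padic_val_ge_of_nat[OF q]]) (simp_all add: e)
  then show ?thesis by simp
qed

text \<open>The \<open>p - 1\<close> copies of the cofactor cost \<open>(p - 1) v_p((k - 1)! (n - k)!) \<le> n\<close>
  (Legendre), which the factor \<open>p^n\<close> pays for.\<close>

lemma fps_padic_bound_pf_local_series_at_p: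
  assumes p: "prime p" and k: "k \<in> {1..n}"
  shows "fps_padic_bound p 0 (padic_val p (of_nat (dlcm n)))
    (pf_local_series (R_numerator p s n) {1..n} (p - 1 + s) k)"
proof -
  define e where "e = padic_val p (of_nat (dlcm n))"
  define X where "X = multiplicity p (fact (k - 1) * fact (n - k) :: nat)"
  have le: "\<And>l. l \<in> {1..n}-{k} \<Longrightarrow> padic_val p (of_int (int l - int k)) \<le> e"
    unfolding e_def using padic_val_node_diff_le_dlcm[OF p k] .
  have e: "0 \<le> e"
    using p by (simp add: e_def padic_val_of_nat dlcm_def Lcm_0_iff)
  have prog: "fps_padic_bound p (0 + - int X) e (progression_fps p n k j * cofactor_inverse_fps n k)" for j
    unfolding X_def using fps_padic_bound_cofactor_inverse[OF p k e le]
    by (intro fps_padic_bound_mult[OF p fps_padic_bound_progression[OF p e]])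
  have "fps_padic_bound p (padic_val p (of_nat p ^ n) + (\<Sum>j\<in>{1..p-1}. 0 + - int X)) e
      (pf_local_series (R_numerator p s n) {1..n} (p - 1 + s) k)"
    by (rule fps_padic_bound_pf_local_series[OF p k e le prog])
  moreover have "padic_val p (of_nat p ^ n) = int n"
    using p by (simp add: padic_val_power padic_val_of_nat prime_gt_0_nat)
  moreover have "(p - 1) * X \<le> n"
    using mult_le_mono2[OF multiplicity_node_diffs_le(1)[OF k, of p], of "p - 1"]
      multiplicity_fact_le[OF p, of "n - 1"] unfolding X_def by linarith
  then have "0 \<le> int n + (\<Sum>j\<in>{1..p-1}. 0 + - int X)"
    by (simp flip: of_nat_mult)
  ultimately show ?thesis
    unfolding e_def using fps_padic_bound_mono by fastforce
qed

subsection \<open>Primes different from \<open>p\<close>\<close>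

definition node_poly :: "nat \<Rightarrow> nat \<Rightarrow> rat poly" where
  "node_poly n k = (\<Prod>l\<in>{1..n}-{k}. [:of_int (int l - int k), 1:])"

definition node_poly_except :: "nat \<Rightarrow> nat \<Rightarrow> nat \<Rightarrow> rat poly" where
  "node_poly_except n k l = (\<Prod>l'\<in>{1..n}-{k}-{l}. [:of_int (int l' - int k), 1:])"

definition lagrange_weight :: "rat poly \<Rightarrow> nat \<Rightarrow> nat \<Rightarrow> nat \<Rightarrow> rat" where
  "lagrange_weight N n k l = poly N (of_nat k - of_nat l) / (\<Prod>l'\<in>{1..n}-{l}. of_nat l' - of_nat l)"

lemma degree_lagrange_sum:
  assumes k: "k \<in> {1..n}"
  shows "degree (\<Sum>l\<in>{1..n}-{k}. smult (c l) ([:0, 1:] * node_poly_except n k l)) \<le> n - 1"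
proof (rule degree_sum_le)
  fix l
  assume l: "l \<in> {1..n}-{k}"
  then have "card ({1..n}-{k}-{l}) = n - 2"
    using k by (simp add: card_Diff_subset)
  moreover have "degree (node_poly_except n k l) = card ({1..n}-{k}-{l})"
    unfolding node_poly_except_def by (subst degree_prod_eq_sum_degree) auto
  ultimately have "degree ([:0, 1:] * node_poly_except n k l) \<le> n - 1"
    using l k by (auto simp: degree_mult_eq)
  then show "degree (smult (c l) ([:0, 1:] * node_poly_except n k l)) \<le> n - 1"
    using degree_smult_le order_trans by blast
qed simp

lemma poly_lagrange_sum_at_node:
  assumes k: "k \<in> {1..n}" and l0: "l0 \<in> {1..n}"
  shows "poly ([:c k, a:] * node_poly n k +
      (\<Sum>l\<in>{1..n}-{k}. smult (c l) ([:0, 1:] * node_poly_except n k l))) (of_nat k - of_nat l0) =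
    c l0 * (\<Prod>l'\<in>{1..n}-{l0}. (of_nat l' - of_nat l0))"
proof -
  define z :: rat where "z = of_nat k - of_nat l0"
  have node: "poly (node_poly n k) z = (\<Prod>l\<in>{1..n}-{k}. of_nat l - of_nat l0)"
    unfolding node_poly_def poly_prod z_def by (intro prod.cong) simp_all
  have except: "poly (node_poly_except n k l) z = (\<Prod>l'\<in>{1..n}-{k}-{l}. of_nat l' - of_nat l0)" for l
    unfolding node_poly_except_def poly_prod z_def by (intro prod.cong) simp_all
  show ?thesis
  proof (cases "l0 = k")
    case True
    then have "z = 0" by (simp add: z_def)
    with True node show ?thesis by (simp add: z_def[symmetric] poly_sum)
  next
    case False
    then have l0': "l0 \<in> {1..n}-{k}" using l0 by simp
    have "poly (node_poly n k) z = 0"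
      unfolding node using l0' by (intro prod_zero) auto
    moreover have "poly (node_poly_except n k l) z = 0" if "l \<in> {1..n}-{k}-{l0}" for l
      unfolding except using that l0' by (intro prod_zero) auto
    moreover have "z * poly (node_poly_except n k l0) z = (\<Prod>l'\<in>{1..n}-{l0}. of_nat l' - of_nat l0)"
    proof -
      have "{1..n}-{l0} = insert k ({1..n}-{k}-{l0})" using k False by auto
      then show ?thesis using except[of l0] k False by (simp add: z_def)
    qed
    ultimately show ?thesis
      using l0' by (simp add: z_def[symmetric] poly_sum sum.remove[of _ l0] sum.neutral)
  qed
qed

lemma lagrange_decomposition:
  assumes k: "k \<in> {1..n}" and N: "degree N \<le> n"
  shows "N = [:lagrange_weight N n k k, coeff N n:] * node_poly n k +
    (\<Sum>l\<in>{1..n}-{k}. smult (lagrange_weight N n k l) ([:0, 1:] * node_poly_except n k l))"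
    (is "N = ?R")
proof (rule poly_eqI_degree_lead_coeff[where n = n and A = "(\<lambda>l. of_nat k - of_nat l) ` {1..n}"])
  let ?W = "\<Sum>l\<in>{1..n}-{k}. smult (lagrange_weight N n k l) ([:0, 1:] * node_poly_except n k l)"
  have degW: "degree ?W \<le> n - 1" by (rule degree_lagrange_sum[OF k])
  have node: "degree (node_poly n k) = n - 1" "lead_coeff (node_poly n k) = 1"
    using k unfolding node_poly_def by (simp add: degree_prod_eq_sum_degree) (simp add: lead_coeff_prod)
  have "degree [:lagrange_weight N n k k, coeff N n:] \<le> 1" and n: "n \<ge> 1" using k by simp_all
  then have "degree ([:lagrange_weight N n k k, coeff N n:] * node_poly n k) \<le> n"
    using node degree_mult_le[of "[:lagrange_weight N n k k, coeff N n:]" "node_poly n k"]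
    by linarith
  then show "degree ?R \<le> n"
    using degW k by (intro degree_add_le) auto
  have "coeff ([:lagrange_weight N n k k, coeff N n:] * node_poly n k) n = coeff N n"
    using node k by (cases n) (auto simp: coeff_eq_0)
  moreover have "coeff ?W n = 0"
    using degW n by (intro coeff_eq_0) linarith
  ultimately show "coeff N n = coeff ?R n"
    by (simp only: coeff_add)
  show "degree N \<le> n" by (rule N)
  show "n \<le> card ((\<lambda>l. of_nat k - of_nat l :: rat) ` {1..n})"
    by (subst card_image) (auto intro: inj_onI)
  fix z
  assume "z \<in> (\<lambda>l. of_nat k - of_nat l :: rat) ` {1..n}"
  then obtain l0 where l0: "l0 \<in> {1..n}" and z: "z = of_nat k - of_nat l0" by blast
  have "(\<Prod>l'\<in>{1..n}-{l0}. of_nat l' - of_nat l0 :: rat) \<noteq> 0" by simp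
  then show "poly N z = poly ?R z"
    unfolding z poly_lagrange_sum_at_node[OF k l0] by (simp add: lagrange_weight_def)
qed

lemma fps_of_node_poly:
  "fps_of_poly (node_poly n k) = (\<Prod>l\<in>{1..n}-{k}. fps_lin (of_int (int l - int k)) 1)"
  unfolding node_poly_def fps_of_poly_prod fps_of_poly_linear ..

lemma inverse_fps_lin_mult_node_poly:
  assumes "l \<in> {1..n}-{k}"
  shows "inverse (fps_lin (of_int (int l - int k)) 1) * fps_of_poly (node_poly n k) =
    fps_of_poly (node_poly_except n k l)"
proof -
  have "fps_of_poly (node_poly n k) = fps_lin (of_int (int l - int k)) 1 * fps_of_poly (node_poly_except n k l)"
    unfolding fps_of_node_poly node_poly_except_def fps_of_poly_prod fps_of_poly_linear
    using assms by (subst prod.remove) auto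
  moreover have "fps_lin (of_int (int l - int k)) 1 $ 0 \<noteq> 0"
    using assms by (simp add: fps_lin_def)
  ultimately show ?thesis
    by (simp add: mult.assoc[symmetric] inverse_mult_eq_1)
qed

lemma fps_lagrange_decomposition:
  assumes k: "k \<in> {1..n}" and N: "degree N \<le> n"
  shows "fps_of_poly N * cofactor_inverse_fps n k = fps_lin (lagrange_weight N n k k) (coeff N n) +
    (\<Sum>l\<in>{1..n}-{k}. fps_const (lagrange_weight N n k l) * (fps_X * inverse (fps_lin (of_int (int l - int k)) 1)))"
    (is "_ = ?R")
proof -
  define W where "W = fps_of_poly (node_poly n k)"
  have "W $ 0 = poly (node_poly n k) 0"
    by (simp add: W_def poly_0_coeff_0)
  then have W0: "W $ 0 \<noteq> 0"
    by (simp add: node_poly_def poly_prod)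
  have "?R * W = fps_lin (lagrange_weight N n k k) (coeff N n) * W +
      (\<Sum>l\<in>{1..n}-{k}. fps_const (lagrange_weight N n k l) *
        (fps_X * (inverse (fps_lin (of_int (int l - int k)) 1) * W)))"
    by (simp only: distrib_right sum_distrib_right mult.assoc)
  also have "\<dots> = fps_lin (lagrange_weight N n k k) (coeff N n) * W +
      (\<Sum>l\<in>{1..n}-{k}. fps_const (lagrange_weight N n k l) * (fps_X * fps_of_poly (node_poly_except n k l)))"
    unfolding W_def
    by (intro arg_cong[where f = "\<lambda>x. _ + x"] sum.cong refl) (simp only: inverse_fps_lin_mult_node_poly)
  also have "\<dots> = fps_of_poly ([:lagrange_weight N n k k, coeff N n:] * node_poly n k +
      (\<Sum>l\<in>{1..n}-{k}. smult (lagrange_weight N n k l) ([:0, 1:] * node_poly_except n k l)))"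
    by (simp add: W_def fps_of_poly_add fps_of_poly_mult fps_of_poly_sum fps_of_poly_smult
        fps_of_poly_pCons fps_lin_def distrib_right mult_ac)
  also have "\<dots> = fps_of_poly N"
    by (simp only: lagrange_decomposition[OF k N, symmetric])
  finally have "fps_of_poly N * inverse W = ?R * (W * inverse W)"
    by (simp only: mult.assoc[symmetric])
  moreover have "cofactor_inverse_fps n k = inverse W"
    unfolding W_def fps_of_node_poly cofactor_inverse_fps_def inverse_fps_prod ..
  ultimately show ?thesis
    unfolding inverse_mult_eq_1'[OF W0] by simp
qed

lemma dvd_prod_diff_prod:
  fixes f g :: "'a \<Rightarrow> int"
  assumes "\<And>u. u \<in> A \<Longrightarrow> m dvd f u - g u"
  shows "m dvd (\<Prod>u\<in>A. f u) - (\<Prod>u\<in>A. g u)"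
  using assms
proof (induction A rule: infinite_finite_induct)
  case (insert a A)
  have "f a * prod f A - g a * prod g A = f a * (prod f A - prod g A) + (f a - g a) * prod g A"
    by (simp add: algebra_simps)
  with insert show ?case by simp
qed simp_all

text \<open>If \<open>p u \<equiv> 1\<close> modulo \<open>q^E\<close>, then \<open>u^n\<close> times the progression is congruent to a product of
  \<open>n\<close> consecutive integers, which is divisible by \<open>n!\<close>; and \<open>(p u)^n \<equiv> 1\<close>.\<close>

lemma multiplicity_fact_le_prod_progression:
  fixes x :: int
  assumes q: "prime q" and qp: "\<not> q dvd p" and nz: "(\<Prod>w<n. x + int p * int w) \<noteq> 0"
  shows "multiplicity q (fact n :: nat) \<le> multiplicity (int q) (\<Prod>w<n. x + int p * int w)"
proof -
  define m where "m = int q ^ multiplicity q (fact n :: nat)"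
  define P where "P = (\<Prod>w<n. x + int p * int w)"
  have "coprime (int p) m"
    using prime_imp_coprime[OF q qp] by (simp add: m_def coprime_commute)
  then obtain u v where "u * int p + v * m = 1"
    using bezout_int[of "int p" m] by (auto simp: coprime_iff_gcd_eq_1)
  then have "int p * u - 1 = m * (- v)" by (simp add: algebra_simps)
  then have pu: "m dvd int p * u - 1" by (rule dvdI)
  have diff: "m dvd (\<Prod>w<n. u * (x + int p * int w)) - (\<Prod>w<n. u * x + int w)"
  proof (rule dvd_prod_diff_prod)
    fix w
    have "u * (x + int p * int w) - (u * x + int w) = (int p * u - 1) * int w"
      by (simp add: algebra_simps)
    then show "m dvd u * (x + int p * int w) - (u * x + int w)" using pu by simp
  qed
  have consecutive: "m dvd (\<Prod>w<n. u * x + int w)"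
  proof -
    have "int (q ^ multiplicity q (fact n :: nat)) dvd int (fact n)"
      unfolding of_nat_dvd_iff by (rule multiplicity_dvd)
    then have "m dvd fact n" by (simp add: m_def)
    also have "fact n dvd pochhammer (u * x) n" by (rule fact_dvd_pochhammer)
    finally show ?thesis by (simp add: pochhammer_prod atLeast0LessThan)
  qed
  have "m dvd (\<Prod>w<n. u * (x + int p * int w))"
    using dvd_add[OF diff consecutive] by simp
  then have "m dvd int p ^ n * (u ^ n * P)"
    by (simp add: P_def prod.distrib)
  moreover have "m dvd ((int p * u) ^ n - 1) * P"
    using dvd_trans[OF pu, of "(int p * u) ^ n - 1"] by (simp add: power_diff_1_eq)
  ultimately have "m dvd P"
    using dvd_diff by (fastforce simp: algebra_simps)
  then show ?thesis
    unfolding m_def P_def using nz q by (intro multiplicity_geI) (auto simp: prime_elem_def)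
qed

definition progression_poly :: "nat \<Rightarrow> nat \<Rightarrow> nat \<Rightarrow> nat \<Rightarrow> rat poly" where
  "progression_poly p n k j = (\<Prod>u<n. [:of_int (int j + int p * (int u - int k)), of_nat p:])"

lemma fps_of_progression_poly: "fps_of_poly (progression_poly p n k j) = progression_fps p n k j"
  unfolding progression_poly_def progression_fps_def fps_of_poly_prod fps_of_poly_linear ..

lemma degree_progression_poly: "degree (progression_poly p n k j) \<le> n"
proof -
  have "degree (progression_poly p n k j) \<le> (\<Sum>u<n. 1)"
    unfolding progression_poly_def
    by (rule order_trans[OF degree_prod_sum_le sum_mono]) (auto simp: degree_pCons_le)
  then show ?thesis by simp
qed

lemma coeff_progression_poly:
  assumes "p > 0"
  shows "coeff (progression_poly p n k j) n = of_nat p ^ n"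
proof -
  have "degree (progression_poly p n k j) = n"
    unfolding progression_poly_def using assms by (simp add: degree_prod_eq_sum_degree)
  moreover have "lead_coeff (progression_poly p n k j) = of_nat p ^ n"
    unfolding progression_poly_def using assms by (simp add: lead_coeff_prod)
  ultimately show ?thesis by simp
qed

lemma poly_progression_poly_at_node:
  "poly (progression_poly p n k j) (of_nat k - of_nat l) = of_int (\<Prod>u<n. int j + int p * (int u - int l))"
  unfolding progression_poly_def poly_prod
  by (subst of_int_prod, rule prod.cong) (simp_all add: algebra_simps)

lemma progression_term_nonzero:
  assumes "prime p" "j \<in> {1..p-1}"
  shows "int j + int p * c \<noteq> 0"
proof
  assume "int j + int p * c = 0"
  then have "int p dvd int j" by (metis dvd_triv_left add.commute dvd_add_right_iff dvd_0_right)
  with assms show False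
    using prime_gt_1_nat[of p] by (auto dest: dvd_imp_le)
qed

lemma padic_val_ge_lagrange_weight_progression:
  assumes q: "prime q" and qp: "\<not> q dvd p" and p: "prime p" and j: "j \<in> {1..p-1}" and l: "l \<in> {1..n}"
  shows "padic_val_ge q (lagrange_weight (progression_poly p n k j) n k l) 0"
proof -
  define Z where "Z = (\<Prod>u<n. int j + int p * (int u - int l))"
  have Z0: "Z \<noteq> 0"
    unfolding Z_def using progression_term_nonzero[OF p j] by simp
  have "Z = (\<Prod>u<n. (int j - int p * int l) + int p * int u)"
    unfolding Z_def by (intro prod.cong) (simp_all add: algebra_simps)
  then have "int (multiplicity q (fact n :: nat)) \<le> padic_val q (of_int Z)"
    using multiplicity_fact_le_prod_progression[OF q qp, of "int j - int p * int l" n] Z0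
      padic_val_of_int[OF q Z0] by simp
  moreover have "padic_val q (\<Prod>l'\<in>{1..n}-{l}. of_nat l' - of_nat l) =
      int (multiplicity q (fact (l - 1) * fact (n - l) :: nat))"
    using padic_val_node_diffs[OF q l] padic_val_prod[OF q, of "{1..n}-{l}" "\<lambda>l'. of_nat l' - of_nat l"]
    by simp
  ultimately show ?thesis
    using multiplicity_node_diffs_le(2)[OF l, of q] Z0 q
    by (simp add: padic_val_ge_def lagrange_weight_def padic_val_divide poly_progression_poly_at_node
        flip: Z_def)
qed

text \<open>The cofactor alone loses \<open>v_q((k - 1)! (n - k)!)\<close> for each of its \<open>p - 1 + s\<close> copies,
  while \<open>n!^s\<close> only compensates \<open>s\<close> of them. Multiplied by a progression factor it becomes
  \<open>q\<close>-integral: by Lagrange interpolation the product is a combination of \<open>1\<close>, \<open>X\<close> and the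
  \<open>X / (X + l - k)\<close>, with \<open>q\<close>-integral weights.\<close>

lemma fps_padic_bound_progression_cofactor_inverse:
  assumes q: "prime q" and qp: "\<not> q dvd p" and p: "prime p" and k: "k \<in> {1..n}" and j: "j \<in> {1..p-1}"
    and e: "0 \<le> e" and le: "\<And>l. l \<in> {1..n}-{k} \<Longrightarrow> padic_val q (of_int (int l - int k)) \<le> e"
  shows "fps_padic_bound q 0 e (progression_fps p n k j * cofactor_inverse_fps n k)"
proof -
  let ?N = "progression_poly p n k j"
  have "padic_val_ge q (coeff ?N n) (0 - e)"
    using padic_val_ge_of_nat[OF q, of "p ^ n"] e coeff_progression_poly[of p n k j] p
    by (auto simp: prime_gt_0_nat intro: padic_val_ge_mono)
  then have "fps_padic_bound q 0 e (fps_lin (lagrange_weight ?N n k k) (coeff ?N n))"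
    using padic_val_ge_lagrange_weight_progression[OF q qp p j k] e
    by (intro fps_padic_bound_lin) simp_all
  moreover have "fps_padic_bound q 0 e (\<Sum>l\<in>{1..n}-{k}. fps_const (lagrange_weight ?N n k l) *
      (fps_X * inverse (fps_lin (of_int (int l - int k)) 1)))"
  proof (rule fps_padic_bound_sum[OF q])
    fix l
    assume l: "l \<in> {1..n}-{k}"
    have "fps_padic_bound q 0 e (fps_const (lagrange_weight ?N n k l))"
      using padic_val_ge_lagrange_weight_progression[OF q qp p j, of l n k] l e
      by (intro fps_padic_bound_const) simp_all
    moreover have "fps_padic_bound q 0 e (fps_X * inverse (fps_lin (of_int (int l - int k)) 1))"
      using l le[OF l] by (intro fps_padic_bound_X_times_inverse_lin[OF q]) auto
    ultimately show "fps_padic_bound q 0 e (fps_const (lagrange_weight ?N n k l) *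
        (fps_X * inverse (fps_lin (of_int (int l - int k)) 1)))"
      using fps_padic_bound_mult[OF q] by fastforce
  qed
  ultimately show ?thesis
    unfolding fps_of_progression_poly[symmetric] fps_lagrange_decomposition[OF k degree_progression_poly]
    using fps_padic_bound_add[OF q] by blast
qed

lemma fps_padic_bound_pf_local_series_coprime:
  assumes q: "prime q" and p: "prime p" and qp: "q \<noteq> p" and k: "k \<in> {1..n}"
  shows "fps_padic_bound q 0 (padic_val q (of_nat (dlcm n)))
    (pf_local_series (R_numerator p s n) {1..n} (p - 1 + s) k)"
proof -
  define e where "e = padic_val q (of_nat (dlcm n))"
  have le: "\<And>l. l \<in> {1..n}-{k} \<Longrightarrow> padic_val q (of_int (int l - int k)) \<le> e"
    unfolding e_def using padic_val_node_diff_le_dlcm[OF q k] .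
  have e: "0 \<le> e"
    using q by (simp add: e_def padic_val_of_nat dlcm_def Lcm_0_iff)
  have qp': "\<not> q dvd p"
    using q p qp primes_dvd_imp_eq by blast
  have prog: "fps_padic_bound q 0 e (progression_fps p n k j * cofactor_inverse_fps n k)"
    if "j \<in> {1..p-1}" for j
    by (rule fps_padic_bound_progression_cofactor_inverse[OF q qp' p k that e le])
  have "fps_padic_bound q (padic_val q (of_nat p ^ n) + (\<Sum>j\<in>{1..p-1}. 0)) e
      (pf_local_series (R_numerator p s n) {1..n} (p - 1 + s) k)"
    by (rule fps_padic_bound_pf_local_series[OF q k e le prog])
  moreover have "padic_val q (of_nat p ^ n) = 0"
    using q p qp' by (simp add: padic_val_power padic_val_of_nat prime_gt_0_nat not_dvd_imp_multiplicity_0)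
  ultimately show ?thesis
    unfolding e_def by simp
qed

subsection \<open>Primes between \<open>sqrt (p n)\<close> and \<open>n\<close>\<close>

lemma div_add_1_int:
  fixes x q :: int
  assumes q: "q > 0"
  shows "(x + 1) div q = x div q + (if q dvd x + 1 then 1 else 0)"
proof (cases "q dvd x + 1")
  case True
  then obtain c where c: "x + 1 = q * c" ..
  then have "x = (q - 1) + (c - 1) * q"
    by (simp add: algebra_simps)
  then have "x div q = (q - 1) div q + (c - 1)"
    using q by simp
  also have "(q - 1) div q = 0"
    using q by (intro div_pos_pos_trivial) auto
  finally have "(x + 1) div q = x div q + 1"
    using c q by simp
  with True show ?thesis by simp
next
  case False
  have "x mod q + 1 \<noteq> q"
  proof
    assume "x mod q + 1 = q"
    then have "x + 1 = q * (x div q + 1)"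
      by (metis add.assoc distrib_left mult.right_neutral mult_div_mod_eq)
    with False show False by (metis dvd_triv_left)
  qed
  moreover have "0 \<le> x mod q" "x mod q < q" using q by simp_all
  ultimately have "(x mod q + 1) div q = 0"
    by (intro div_pos_pos_trivial) auto
  moreover have "q \<noteq> 1" using False by auto
  then have "1 div q = 0" "1 mod q = 1" using q by simp_all
  ultimately show ?thesis
    using False div_add1_eq[of x 1 q] by simp
qed

lemma div_add_div_le_int:
  fixes a b q :: int
  assumes "q > 0"
  shows "a div q + b div q \<le> (a + b) div q"
  using div_add1_eq[of a b q] assms by (simp add: pos_imp_zdiv_nonneg_iff)

lemma div_add_le_int:
  fixes a b q :: int
  assumes q: "q > 0"
  shows "(a + b) div q \<le> a div q + b div q + 1"
proof -
  have "a mod q < q" "b mod q < q" using q by simp_all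
  then have "a mod q + b mod q \<le> q - 1 + 1 * q" by simp
  then have "(a mod q + b mod q) div q \<le> (q - 1 + 1 * q) div q" using q by (rule zdiv_mono1)
  also have "\<dots> = 1 + (q - 1) div q" using q by (subst div_mult_self1) auto
  also have "(q - 1) div q = 0" using q by (intro div_pos_pos_trivial) auto
  finally show ?thesis using div_add1_eq[of a b q] by simp
qed

lemma sum_dvd_count_int:
  fixes a q :: int
  assumes "q > 0"
  shows "(\<Sum>j=1..m. if q dvd a + int j then 1 else 0 :: int) = (a + int m) div q - a div q"
proof (induction m)
  case (Suc m)
  then show ?case
    using div_add_1_int[OF assms, of "a + int m"] by (auto simp: algebra_simps)
qed simp

lemma mult_div_eq_mult_div_add_mod: "(p * n) div q = p * (n div q) + (p * (n mod q)) div (q :: nat)"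
proof (cases "q = 0")
  case False
  have "p * n = p * (n mod q) + p * (n div q) * q"
    by (metis add.commute distrib_left div_mult_mod_eq mult.assoc)
  with False show ?thesis by simp
qed simp

lemma div_scaled_diff_ge:
  fixes a b c Q :: int
  assumes "Q > 0"
  shows "(c * a) div Q - a div Q - 1 \<le> ((c * (a + b)) div Q - (a + b) div Q) - ((c * b) div Q - b div Q)"
  using div_add_div_le_int[OF assms, of "c * a" "c * b"] div_add_le_int[OF assms, of a b]
  by (simp add: distrib_left)

text \<open>Among the integers \<open>p c + j\<close>, \<open>1 \<le> j \<le> p\<close>, the last one is divisible by \<open>q\<close> iff \<open>q\<close> divides
  \<open>c + 1\<close>, so the count over \<open>1 \<le> j < p\<close> is an increment of \<open>\<lfloor>p c / q\<rfloor> - \<lfloor>c / q\<rfloor>\<close>; summing over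
  the blocks \<open>c = u - k\<close> telescopes.\<close>

lemma count_progression_multiples:
  fixes Q :: int and p :: nat
  defines "G c \<equiv> (int p * c) div Q - c div Q"
  assumes q: "prime Q" and qp: "\<not> Q dvd int p" and p: "p \<ge> 1"
  shows "(\<Sum>j\<in>{1..p-1}. \<Sum>u<n. if Q dvd int j + int p * (int u - int k) then 1 else 0 :: int) =
    G (int n - int k) - G (- int k)"
proof -
  have Q: "Q > 0" using q by (simp add: prime_gt_0_int)
  have block: "(\<Sum>j\<in>{1..p-1}. if Q dvd int p * c + int j then 1 else 0 :: int) = G (c + 1) - G c" for c
  proof -
    have "{1..p} = insert p {1..p-1}" using p by auto
    then have "(\<Sum>j=1..p. if Q dvd int p * c + int j then 1 else 0 :: int) =
        (\<Sum>j\<in>{1..p-1}. if Q dvd int p * c + int j then 1 else 0) + (if Q dvd int p * (c + 1) then 1 else 0)"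
      using p by (simp add: algebra_simps)
    moreover have "Q dvd int p * (c + 1) \<longleftrightarrow> Q dvd c + 1"
      using q qp by (simp add: prime_dvd_mult_iff)
    ultimately show ?thesis
      using sum_dvd_count_int[OF Q, of "int p * c" p] div_add_1_int[OF Q, of c]
      by (simp add: G_def algebra_simps)
  qed
  have "(\<Sum>j\<in>{1..p-1}. \<Sum>u<n. if Q dvd int j + int p * (int u - int k) then 1 else 0 :: int) =
      (\<Sum>u<n. \<Sum>j\<in>{1..p-1}. if Q dvd int p * (int u - int k) + int j then 1 else 0)"
    by (subst sum.swap) (simp add: add.commute)
  also have "\<dots> = (\<Sum>u<n. G (int u - int k + 1) - G (int u - int k))"
    by (simp only: block)
  also have "\<dots> = (\<Sum>u<n. G (int (Suc u) - int k) - G (int u - int k))"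
    by (intro sum.cong) (simp_all add: algebra_simps)
  also have "\<dots> = G (int n - int k) - G (- int k)"
    by (subst sum_lessThan_telescope) simp
  finally show ?thesis .
qed

lemma abs_progression_term_less:
  assumes j: "j \<in> {1..p-1}" and u: "u < n" and k: "k \<in> {1..n}"
  shows "\<bar>int j + int p * (int u - int k)\<bar> < int p * int n"
proof -
  have "int p * (int u - int k) \<le> int p * (int n - 2)"
    using u k by (intro mult_left_mono) auto
  moreover have "int p * (- int n) \<le> int p * (int u - int k)"
    using u k by (intro mult_left_mono) auto
  moreover have "1 \<le> int j" "int j \<le> int p - 1" using j by auto
  ultimately show ?thesis by (simp add: abs_less_iff algebra_simps)
qed

lemma fps_padic_bound_progression_large_prime:
  assumes q: "prime q" and p: "prime p" and pq: "p < q" and pn: "p * n < q ^ 2"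
    and k: "k \<in> {1..n}" and j: "j \<in> {1..p-1}"
  shows "fps_padic_bound q (\<Sum>u<n. padic_val q (of_int (int j + int p * (int u - int k)))) 1
    (progression_fps p n k j)"
  unfolding progression_fps_def
proof (intro fps_padic_bound_prod[OF q] fps_padic_bound_lin)
  fix u
  assume "u \<in> {..<n}"
  then have "\<bar>int j + int p * (int u - int k)\<bar> < int q ^ 2"
    using abs_progression_term_less[OF j _ k, of u] pn by (simp flip: of_nat_mult of_nat_power)
  then have "padic_val q (of_int (int j + int p * (int u - int k))) \<le> 1"
    using progression_term_nonzero[OF p j] by (intro padic_val_of_int_le_1[OF q]) auto
  moreover have "padic_val q (of_nat p) = 0"
    using q p pq by (simp add: padic_val_of_nat prime_gt_0_nat not_dvd_imp_multiplicity_0 nat_dvd_not_less)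
  ultimately show "padic_val_ge q (of_nat p) (padic_val q (of_int (int j + int p * (int u - int k))) - 1)"
    by (simp add: padic_val_ge_def)
qed (simp_all add: padic_val_ge_def)

lemma sum_padic_val_progression_ge:
  assumes q: "prime q" and p: "prime p" and pq: "p < q" and pn: "p * n < q ^ 2" and k: "k \<in> {1..n}"
  shows "int ((p * (n mod q)) div q) - 1 \<le> (\<Sum>j\<in>{1..p-1}.
    (\<Sum>u<n. padic_val q (of_int (int j + int p * (int u - int k)))) -
    int (multiplicity q (fact (k - 1) * fact (n - k) :: nat)))"
proof -
  define X where "X = multiplicity q (fact (k - 1) * fact (n - k) :: nat)"
  define F where "F = int n div int q"
  define G where "G c = (int p * c) div int q - c div int q" for c
  define count where "count = (\<Sum>j\<in>{1..p-1}. \<Sum>u<n.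
    if int q dvd int j + int p * (int u - int k) then 1 else 0 :: int)"
  have p0: "p > 0" using p by (simp add: prime_gt_0_nat)
  have qp: "\<not> int q dvd int p" using pq p0 by (auto dest: dvd_imp_le)
  have "n \<le> p * n" "p * n < q * q"
    using pn p0 by (simp_all add: power2_eq_square)
  then have "multiplicity q (fact n :: nat) = n div q"
    by (intro multiplicity_fact_eq_div[OF q]) linarith
  then have "int X \<le> F"
    using multiplicity_node_diffs_le(2)[OF k, of q] by (simp add: X_def F_def flip: zdiv_int)
  then have "int (p - 1) * int X \<le> int (p - 1) * F"
    by (intro mult_left_mono) auto
  moreover have "count = G (int n - int k) - G (- int k)"
    unfolding count_def G_def
    using count_progression_multiples[OF _ qp, of k n] q p0 by (simp only: prime_nat_int_transfer Suc_le_eq)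
  moreover have "int (p * n div q) = int p * F + int ((p * (n mod q)) div q)"
    unfolding mult_div_eq_mult_div_add_mod[of p n q] by (simp add: F_def zdiv_int)
  then have "int p * F + int ((p * (n mod q)) div q) - F - 1 \<le> G (int n - int k) - G (- int k)"
    using div_scaled_diff_ge[of "int q" "int p" "int n" "- int k"] q
    by (simp add: G_def F_def prime_gt_0_nat zdiv_int)
  moreover have "count \<le> (\<Sum>j\<in>{1..p-1}. \<Sum>u<n. padic_val q (of_int (int j + int p * (int u - int k))))"
    unfolding count_def
    by (intro sum_mono dvd_indicator_le_padic_val[OF q] progression_term_nonzero[OF p]) auto
  moreover have "int (p - 1) * F = int p * F - F"
    using p0 by (simp add: algebra_simps)
  ultimately show ?thesis
    by (simp add: sum_subtractf X_def)
qed

lemma fps_padic_bound_pf_local_series_large_prime: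
  assumes q: "prime q" and p: "prime p" and pq: "p < q" and pn: "p * n < q ^ 2" and k: "k \<in> {1..n}"
  shows "fps_padic_bound q (int ((p * (n mod q)) div q) - 1) 1
    (pf_local_series (R_numerator p s n) {1..n} (p - 1 + s) k)"
proof -
  have le: "padic_val q (of_int (int l - int k)) \<le> 1" if l: "l \<in> {1..n}-{k}" for l
  proof (rule padic_val_of_int_le_1[OF q])
    have "\<bar>int l - int k\<bar> < int n" using l k by auto
    also have "\<dots> \<le> int p * int n" using prime_gt_0_nat[OF p] by (simp add: mult_le_cancel_right1)
    also have "\<dots> < int q ^ 2" using pn by (simp flip: of_nat_mult of_nat_power)
    finally show "\<bar>int l - int k\<bar> < int q ^ 2" .
  qed (use l in auto)
  have "fps_padic_bound q (padic_val q (of_nat p ^ n) + (\<Sum>j\<in>{1..p-1}.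
      (\<Sum>u<n. padic_val q (of_int (int j + int p * (int u - int k)))) +
      - int (multiplicity q (fact (k - 1) * fact (n - k) :: nat)))) 1
      (pf_local_series (R_numerator p s n) {1..n} (p - 1 + s) k)"
    by (rule fps_padic_bound_pf_local_series[OF q k _ le] fps_padic_bound_mult[OF q]
        fps_padic_bound_progression_large_prime[OF q p pq pn k]
        fps_padic_bound_cofactor_inverse[OF q k _ le] | simp)+
  moreover have "padic_val q (of_nat p ^ n) = 0"
    using q p pq by (simp add: padic_val_power padic_val_of_nat prime_gt_0_nat
        not_dvd_imp_multiplicity_0 nat_dvd_not_less)
  ultimately show ?thesis
    using sum_padic_val_progression_ge[OF q p pq pn k] fps_padic_bound_mono by fastforce
qed

lemma Phi_pos: "Phi p n > 0"
  unfolding Phi_def by (rule prod_pos) (auto dest: prime_gt_0_nat)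

lemma padic_val_Phi:
  assumes q: "prime q"
  shows "padic_val q (of_nat (Phi p n)) =
    (if sqrt (real (p * n)) < real q \<and> q \<le> n then int (phi_p p (real n / real q)) else 0)"
proof -
  have "finite {q. prime q \<and> sqrt (real (p * n)) < real q \<and> q \<le> n}"
    by (rule finite_subset[of _ "{..n}"]) auto
  then have "multiplicity q (Phi p n) =
      (if sqrt (real (p * n)) < real q \<and> q \<le> n then phi_p p (real n / real q) else 0)"
    unfolding Phi_def using q by (subst multiplicity_prod_prime_powers) auto
  then show ?thesis
    using padic_val_of_nat[OF q] Phi_pos[of p n] by simp
qed

lemma frac_of_nat_div: "q > 0 \<Longrightarrow> frac (real n / real q) = real (n mod q) / real q"
proof -
  assume q: "q > 0"
  have "real n / real q = real (n div q) + real (n mod q) / real q"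
    using q by (simp add: field_simps flip: of_nat_mult of_nat_add)
  moreover have "real (n mod q) / real q \<in> {0..<1}"
    using q by simp
  ultimately show ?thesis
    by (simp add: frac_add_int_left)
qed

lemma phi_p_le:
  assumes "q > 0" and "phi_p p (real n / real q) \<noteq> 0"
  shows "int (phi_p p (real n / real q)) \<le> int ((p * (n mod q)) div q) - 1"
proof -
  have "\<lfloor>real p * frac (real n / real q)\<rfloor> = int ((p * (n mod q)) div q)"
    using assms(1) by (simp add: frac_of_nat_div floor_divide_of_nat_eq flip: of_nat_mult)
  then show ?thesis
    using assms(2) by (auto simp: phi_p_def split: if_splits)
qed

lemma one_le_padic_val_dlcm:
  assumes q: "prime q" and "q \<le> n"
  shows "1 \<le> padic_val q (of_nat (dlcm n))"
proof -
  have "q \<in> {1..n}" using assms prime_gt_0_nat[OF q] by simp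
  then have "q dvd dlcm n" unfolding dlcm_def by (rule dvd_Lcm)
  then have "1 \<le> multiplicity q (dlcm n)"
    using q by (intro multiplicity_geI) (auto simp: dlcm_def Lcm_0_iff prime_elem_def)
  then show ?thesis using q by (simp add: padic_val_of_nat dlcm_def Lcm_0_iff)
qed

lemma fps_padic_bound_pf_local_series_Phi:
  assumes q: "prime q" and p: "prime p" and np: "p \<le> n" and k: "k \<in> {1..n}"
  shows "fps_padic_bound q (padic_val q (of_nat (Phi p n))) (padic_val q (of_nat (dlcm n)))
    (pf_local_series (R_numerator p s n) {1..n} (p - 1 + s) k)"
proof -
  have sqrt_ge: "real p \<le> sqrt (real (p * n))"
    using np by (intro real_le_rsqrt) (simp add: power2_eq_square mult_left_mono)
  consider "q = p" | "q \<noteq> p" "padic_val q (of_nat (Phi p n)) = 0"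
    | "sqrt (real (p * n)) < real q" "q \<le> n" "phi_p p (real n / real q) \<noteq> 0"
    using padic_val_Phi[OF q, of p n] by (cases "q = p") (auto split: if_splits)
  then show ?thesis
  proof cases
    case 1
    then show ?thesis
      using fps_padic_bound_pf_local_series_at_p[OF p k] sqrt_ge padic_val_Phi[OF q, of p n] by auto
  next
    case 2
    then show ?thesis
      using fps_padic_bound_pf_local_series_coprime[OF q p _ k] by simp
  next
    case 3
    then have pq: "p < q" using sqrt_ge by linarith
    have "real (p * n) < real q ^ 2"
      using 3 by (metis of_nat_0_le_iff real_sqrt_less_iff real_sqrt_unique)
    then have pn: "p * n < q ^ 2" by (simp only: of_nat_less_iff flip: of_nat_power of_nat_mult)
    have "1 \<le> padic_val q (of_nat (dlcm n))"
      using 3 q by (intro one_le_padic_val_dlcm)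
    moreover have "padic_val q (of_nat (Phi p n)) \<le> int ((p * (n mod q)) div q) - 1"
      using 3 q padic_val_Phi[OF q, of p n] phi_p_le[of q p n] by (simp add: prime_gt_0_nat)
    ultimately show ?thesis
      using fps_padic_bound_mono[OF fps_padic_bound_pf_local_series_large_prime[OF q p pq pn k]] by blast
  qed
qed

lemma dlcm_power_mult_pf_local_coeff_div_Phi_in_Ints:
  assumes "prime p" "p \<le> n" "k \<in> {1..n}"
  shows "of_nat (dlcm n) ^ m * pf_local_series (R_numerator p s n) {1..n} (p - 1 + s) k $ m /
    of_nat (Phi p n) \<in> (\<int> :: rat set)"
proof (rule Ints_if_padic_val_ge_0)
  fix q :: nat
  assume "prime q"
  then show "padic_val_ge q (of_nat (dlcm n) ^ m *
      pf_local_series (R_numerator p s n) {1..n} (p - 1 + s) k $ m / of_nat (Phi p n)) 0"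
    using fps_padic_bound_pf_local_series_Phi[OF _ assms] Phi_pos[of p n]
    by (intro padic_val_ge_scaled_coeff) (auto simp: dlcm_def Lcm_0_iff)
qed

theorem lemma5p5:
  fixes p s n i :: nat
  assumes "prime p" and "p \<ge> 5" and "s > 0"
    and "n > (p + s) ^ 4"
    and "i \<in> {2..p - 1 + s}"
  shows "of_nat (dlcm n) ^ (p - 1 + s - i) * rho p s n i / of_nat (Phi p n) \<in> (\<int> :: rat set)"
proof -
  have p2: "p \<ge> 2" and "p \<le> n" and i: "i \<in> {1..p - 1 + s}"
    using assms(2,4,5) power_increasing[of 1 4 "p + s"] by auto
  have "of_nat (dlcm n) ^ (p - 1 + s - i) * rho p s n i / of_nat (Phi p n) =
      (\<Sum>k=1..n. of_nat (dlcm n) ^ (p - 1 + s - i) *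
        pf_local_series (R_numerator p s n) {1..n} (p - 1 + s) k $ (p - 1 + s - i) / of_nat (Phi p n))"
    unfolding rho_def using pf_coeff_eq_pf_local_series[OF p2 assms(3,4) i]
    by (simp add: sum_distrib_left sum_divide_distrib)
  also have "\<dots> \<in> \<int>"
    using dlcm_power_mult_pf_local_coeff_div_Phi_in_Ints[OF assms(1) \<open>p \<le> n\<close>] by (intro Ints_sum)
  finally show ?thesis .
qed

end
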